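(* Let $M$ be a closed rooted combinatorial map with $|M|$ edges, let $N$ be a rooted map, and let $k,\ell$ be integers for which the operations below are defined. Then $$\mathrm{Ins}_{M,\ell}\big(R_k(N)\big)=R_k\big(\mathrm{Ins}_{M,\ell-2}(N)\big)\quad\text{if }k\le \ell-2,$$ $$\mathrm{Ins}_{M,\ell}\big(R_k(N)\big)=R_{k+2|M|}\big(\mathrm{Ins}_{M,\ell-1}(N)\big)\quad\text{if }1\le \ell-1\le k.$$
   Context: A rooted combinatorial map is $(H,\sigma,\alpha,r)$: $H$ a finite set of half-edges, $\sigma$ a permutation, $\alpha$ an involution, $r$ a fixed point of $\alpha$ (the root), with $\langle\sigma,\alpha\rangle$ transitive; vertices are $\sigma$-orbits, edges are $\alpha$-orbits (fixed points of $\alpha$ are dangling edges); it is closed if $r$ is the only fixed point of $\alpha$. The size is the number of edges (root included). Maps are drawn so that $\sigma$ gives the counterclockwise cyclic order of half-edges around each vertex; a corner is the angular sector between a half-edge $h$ and $\sigma(h)$; the root corner lies between $r$ and $\sigma(r)$, and the root edge is the edge containing $\sigma(r)$. A map of size $n$ has $2n-1$ corners (the one-half-edge map has one corner, its root corner). Bridge First Labeling (BFL): working on a copy of the map, label the root corner $1$. If the current corner has label $k$, let $e$ be the (possibly dangling) edge adjacent to this corner in the counterclockwise order. If $e$ is a bridge of the current map, go along $e$ to the next corner (at its other endpoint) and label it $k+1$; if $e$ is dangling, go to the following corner counterclockwise and label it $k+1$; otherwise cut $e$ into two dangling edges, go to the following corner counterclockwise and label it $k+1$. Stop upon reaching the root.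 For a map $N$ of size $n$ and $1\le k\le 2n-1$, $R_k(N)$ is obtained by adding a new edge linking the root corner of $N$ and the $k$-th corner of the BFL of $N$ (the new edge becomes the root edge). For a map $M'$, $\mathrm{Ins}_{M',k}(N)$ is obtained by inserting $M'$ at the $k$-th BFL corner of $N$ via a bridge: the root of $M'$ is attached in that corner, becoming a bridge; the root of the result is that of $N$. *)

theory Defs
  imports Main
begin

text \<open>Rooted combinatorial maps with half-edges labelled by natural numbers.
  hes = set of half-edges H, sig = sigma (ccw successor around a vertex),
  alp = alpha (edge involution; fixed points are dangling half-edges), rt = root.
  Only the values of sig/alp on hes matter.\<close>

record cmap =
  hes :: "nat set"
  sig :: "nat \<Rightarrow> nat"
  alp :: "nat \<Rightarrow> nat"
  rt  :: nat

text \<open>The relation generated by sigma and alpha on H (transitivity of the group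
  generated by sigma and alpha = every half-edge reachable from every other).\<close>
definition step_rel :: "nat set \<Rightarrow> (nat \<Rightarrow> nat) \<Rightarrow> (nat \<Rightarrow> nat) \<Rightarrow> (nat \<times> nat) set" where
  "step_rel H s a = {(u, s u) | u. u \<in> H} \<union> {(u, a u) | u. u \<in> H}"

definition connected_hes :: "nat set \<Rightarrow> (nat \<Rightarrow> nat) \<Rightarrow> (nat \<Rightarrow> nat) \<Rightarrow> bool" where
  "connected_hes H s a \<longleftrightarrow> (\<forall>x\<in>H. \<forall>y\<in>H. (x, y) \<in> (step_rel H s a)\<^sup>*)"

definition is_rmap :: "cmap \<Rightarrow> bool" where
  "is_rmap M \<longleftrightarrow> finite (hes M) \<and> bij_betw (sig M) (hes M) (hes M)
     \<and> (\<forall>x\<in>hes M. alp M x \<in> hes M \<and> alp M (alp M x) = x)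
     \<and> rt M \<in> hes M \<and> alp M (rt M) = rt M
     \<and> connected_hes (hes M) (sig M) (alp M)"

definition closed_map :: "cmap \<Rightarrow> bool" where
  "closed_map M \<longleftrightarrow> (\<forall>x\<in>hes M. alp M x = x \<longrightarrow> x = rt M)"

definition msize :: "cmap \<Rightarrow> nat" where
  "msize M = card {{x, alp M x} | x. x \<in> hes M}"

text \<open>Corners: the corner between h and sigma h is identified with h, so the
  number of corners is the number of half-edges.\<close>
definition ncorners :: "cmap \<Rightarrow> nat" where
  "ncorners M = card (hes M)"

definition map_iso :: "cmap \<Rightarrow> cmap \<Rightarrow> bool" where
  "map_iso M1 M2 \<longleftrightarrow> (\<exists>\<phi>. bij_betw \<phi> (hes M1) (hes M2)
      \<and> (\<forall>x\<in>hes M1. \<phi> (sig M1 x) = sig M2 (\<phi> x) \<and> \<phi> (alp M1 x) = alp M2 (\<phi> x))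
      \<and> \<phi> (rt M1) = rt M2)"

text \<open>Bridge First Labelling. State = (current alpha of the working copy, current corner h).
  The edge adjacent (ccw) to corner h is the edge of g = sigma h.\<close>
definition cut_edge :: "(nat \<Rightarrow> nat) \<Rightarrow> nat \<Rightarrow> nat \<Rightarrow> nat" where
  "cut_edge a g = a(g := g, a g := a g)"

definition is_bridge :: "nat set \<Rightarrow> (nat \<Rightarrow> nat) \<Rightarrow> (nat \<Rightarrow> nat) \<Rightarrow> nat \<Rightarrow> bool" where
  "is_bridge H s a g \<longleftrightarrow> a g \<noteq> g \<and> \<not> connected_hes H s (cut_edge a g)"

definition bfl_step :: "cmap \<Rightarrow> (nat \<Rightarrow> nat) \<times> nat \<Rightarrow> (nat \<Rightarrow> nat) \<times> nat" where
  "bfl_step M st = (let a = fst st; g = sig M (snd st) in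
     if is_bridge (hes M) (sig M) a g then (a, a g)
     else if a g = g then (a, g)
     else (cut_edge a g, g))"

definition bfl_state :: "cmap \<Rightarrow> nat \<Rightarrow> (nat \<Rightarrow> nat) \<times> nat" where
  "bfl_state M i = (bfl_step M ^^ i) (alp M, rt M)"

definition bfl_len :: "cmap \<Rightarrow> nat" where
  "bfl_len M = (LEAST i. 0 < i \<and> snd (bfl_state M i) = rt M)"

text \<open>BFL as the list of visited corners (corner labelled j is at index j-1).\<close>
definition bfl :: "cmap \<Rightarrow> nat list" where
  "bfl M = map (\<lambda>i. snd (bfl_state M i)) [0..<bfl_len M]"

definition bfl_corner :: "cmap \<Rightarrow> nat \<Rightarrow> nat" where
  "bfl_corner M k = bfl M ! (k - 1)"

definition fresh :: "nat set \<Rightarrow> nat" where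
  "fresh H = Suc (Max (insert 0 H))"

text \<open>R_k(N): new edge {x,y}; x is inserted in the root corner (so sigma r = x and the
  new edge is the root edge), y in the k-th BFL corner c.\<close>
definition R_op :: "nat \<Rightarrow> cmap \<Rightarrow> cmap" where
  "R_op k N = (let c = bfl_corner N k; r = rt N; s = sig N; x = fresh (hes N); y = Suc x in
     \<lparr> hes = hes N \<union> {x, y},
       sig = (if c = r then s(r := x, x := y, y := s r)
              else s(r := x, x := s r, c := y, y := s c)),
       alp = (alp N)(x := y, y := x),
       rt = r \<rparr>)"

text \<open>Ins_{M,l}(N): a disjoint copy of M (half-edges shifted by off) is attached by a
  new half-edge z inserted in the l-th BFL corner c of N, z being paired with the root
  of M; the root is that of N.\<close>
definition Ins_op :: "cmap \<Rightarrow> nat \<Rightarrow> cmap \<Rightarrow> cmap" where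
  "Ins_op M l N = (let c = bfl_corner N l; off = fresh (hes N);
       HM = (\<lambda>u. off + u) ` hes M; z = off + fresh (hes M) in
     \<lparr> hes = hes N \<union> HM \<union> {z},
       sig = (\<lambda>u. if u \<in> HM then off + sig M (u - off)
                  else if u = c then z else if u = z then sig N c else sig N u),
       alp = (\<lambda>u. if u = off + rt M then z
                  else if u \<in> HM then off + alp M (u - off)
                  else if u = z then off + rt M else alp N u),
       rt = rt N \<rparr>)"

end

theory Submission
  imports Defs
begin

text \<open>The bridge first labelling only cuts edges it does not cross, so the edges it crosses stay
  bridges and the whole labelling is governed by the final working copy A: the corner after h is
  A (\<sigma> h). Were \<sigma> h outside the orbit of the root for some h in it, its edge would be a bridge
  of A, and the walk, which continues on the far side of this bridge at A (\<sigma> h) and returns to h,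
  could only cross back through \<sigma> h itself. Hence the labelling lists every corner exactly once.
  On R_k(N) it reproduces the labelling of N with the two new half-edges spliced in at labels 2 and
  k + 2; on Ins_{M,l}(N) it inserts the labelling of M, followed by the bridge half-edge, after
  label l. Reading off where M and the new edge are attached on both sides of each identity, the
  two maps differ only in the names of their new half-edges, and the renaming is an isomorphism.
  A closed map M has 2|M| - 1 half-edges, which gives the shift by 2|M|.\<close>

section \<open>Connectivity and bridges\<close>

definition stable_set :: "nat set \<Rightarrow> (nat \<Rightarrow> nat) \<Rightarrow> (nat \<Rightarrow> nat) \<Rightarrow> nat set \<Rightarrow> bool" where
  "stable_set H s a S \<longleftrightarrow> S \<subseteq> H \<and> (\<forall>u\<in>S. s u \<in> S \<and> a u \<in> S)"

lemma connected_hes_stable_setD: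
  assumes con: "connected_hes H s a" and S: "stable_set H s a S" and ne: "S \<noteq> {}"
  shows "S = H"
proof -
  obtain x where x: "x \<in> S" using ne by auto
  have "y \<in> S" if y: "y \<in> H" for y
  proof -
    have "(x, y) \<in> (step_rel H s a)\<^sup>*"
      using con x y S by (auto simp: connected_hes_def stable_set_def)
    then show ?thesis
      by (induction rule: rtrancl_induct) (use x S in \<open>auto simp: step_rel_def stable_set_def\<close>)
  qed
  then show "S = H" using S by (auto simp: stable_set_def)
qed

lemma connected_hes_stable_setI:
  assumes sH: "\<forall>u\<in>H. s u \<in> H" and aH: "\<forall>u\<in>H. a u \<in> H"
    and stable: "\<And>S. stable_set H s a S \<Longrightarrow> S \<noteq> {} \<Longrightarrow> S = H"
  shows "connected_hes H s a"
  unfolding connected_hes_def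
proof (intro ballI)
  fix x y assume x: "x \<in> H" and y: "y \<in> H"
  let ?S = "{z. (x, z) \<in> (step_rel H s a)\<^sup>*}"
  have "?S \<subseteq> H"
  proof
    fix z assume "z \<in> ?S"
    then have "(x, z) \<in> (step_rel H s a)\<^sup>*" by simp
    then show "z \<in> H"
      by (induction rule: rtrancl_induct) (use x sH aH in \<open>auto simp: step_rel_def\<close>)
  qed
  moreover have "s u \<in> ?S \<and> a u \<in> ?S" if "u \<in> ?S" for u
  proof -
    have "(u, s u) \<in> step_rel H s a" "(u, a u) \<in> step_rel H s a"
      using that \<open>?S \<subseteq> H\<close> by (auto simp: step_rel_def)
    then show ?thesis using that by (auto intro: rtrancl_into_rtrancl)
  qed
  ultimately have "stable_set H s a ?S" by (auto simp: stable_set_def)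
  then have "?S = H" using stable by blast
  then show "(x, y) \<in> (step_rel H s a)\<^sup>*" using y by auto
qed

definition involution_on :: "nat set \<Rightarrow> (nat \<Rightarrow> nat) \<Rightarrow> bool" where
  "involution_on H a \<longleftrightarrow> (\<forall>u\<in>H. a u \<in> H \<and> a (a u) = u)"

lemma involution_onD:
  "involution_on H a \<Longrightarrow> u \<in> H \<Longrightarrow> a u \<in> H"
  "involution_on H a \<Longrightarrow> u \<in> H \<Longrightarrow> a (a u) = u"
  by (auto simp: involution_on_def)

lemma involution_on_bij: "involution_on H a \<Longrightarrow> bij_betw a H H"
  by (rule bij_betw_byWitness[where f'=a]) (auto simp: involution_on_def)

lemma stable_set_Diff:
  assumes fin: "finite H" and s: "bij_betw s H H" and a: "involution_on H a"
    and S: "stable_set H s a S"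
  shows "stable_set H s a (H - S)"
proof -
  have SH: "S \<subseteq> H" using S by (simp add: stable_set_def)
  have "s ` S \<subseteq> S" using S by (auto simp: stable_set_def)
  moreover have "inj_on s S" using s SH by (meson bij_betw_imp_inj_on inj_on_subset)
  ultimately have sS: "s ` S = S"
    using card_subset_eq[of S "s ` S"] card_image finite_subset[OF SH fin] by metis
  have "s u \<in> H - S" if u: "u \<in> H - S" for u
  proof -
    have "s u \<notin> s ` S" using u s SH by (auto simp: bij_betw_def inj_on_def)
    then show ?thesis using sS u s by (auto dest: bij_betwE)
  qed
  moreover have "a u \<in> H - S" if u: "u \<in> H - S" for u
    using u S a by (metis Diff_iff involution_onD stable_set_def)
  ultimately show ?thesis by (auto simp: stable_set_def)
qed

definition fewer_edges :: "nat set \<Rightarrow> (nat \<Rightarrow> nat) \<Rightarrow> (nat \<Rightarrow> nat) \<Rightarrow> bool" where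
  "fewer_edges H a' a \<longleftrightarrow> (\<forall>u\<in>H. a' u = a u \<or> a' u = u)"

lemma fewer_edges_refl: "fewer_edges H a a"
  by (simp add: fewer_edges_def)

lemma fewer_edges_trans: "fewer_edges H a2 a1 \<Longrightarrow> fewer_edges H a1 a0 \<Longrightarrow> fewer_edges H a2 a0"
  unfolding fewer_edges_def by metis

lemma connected_hes_fewer_edges:
  assumes "connected_hes H s a'" "fewer_edges H a' a"
    and "\<forall>u\<in>H. s u \<in> H" "\<forall>u\<in>H. a u \<in> H"
  shows "connected_hes H s a"
proof (rule connected_hes_stable_setI[OF assms(3,4)])
  fix S assume S: "stable_set H s a S" "S \<noteq> {}"
  have "stable_set H s a' S" using S(1) assms(2)
    unfolding stable_set_def fewer_edges_def by (metis subsetD)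
  then show "S = H" using connected_hes_stable_setD[OF assms(1)] S(2) by blast
qed

lemma cut_edge_in: "involution_on H a \<Longrightarrow> u \<in> H \<Longrightarrow> cut_edge a g u \<in> H"
  by (auto simp: cut_edge_def involution_on_def)

lemma involution_on_cut_edge:
  assumes a: "involution_on H a" and g: "g \<in> H"
  shows "involution_on H (cut_edge a g)"
  unfolding involution_on_def
proof
  fix u assume u: "u \<in> H"
  show "cut_edge a g u \<in> H \<and> cut_edge a g (cut_edge a g u) = u"
  proof (cases "u = g \<or> u = a g")
    case False
    then have "a u \<noteq> g" "a u \<noteq> a g" using a g u by (metis involution_onD(2))+
    then show ?thesis using False a u by (simp add: cut_edge_def involution_onD)
  qed (use u in \<open>auto simp: cut_edge_def\<close>)
qed

lemma fewer_edges_cut_edge: "fewer_edges H (cut_edge a g) a"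
  by (auto simp: fewer_edges_def cut_edge_def)

lemma cut_edge_partner: "a (a g) = g \<Longrightarrow> cut_edge a (a g) = cut_edge a g"
  by (auto simp: cut_edge_def fun_eq_iff)

lemma is_bridge_partner: "a (a g) = g \<Longrightarrow> is_bridge H s a (a g) = is_bridge H s a g"
  unfolding is_bridge_def using cut_edge_partner by metis

lemma is_bridge_fewer_edges:
  assumes "is_bridge H s a g" "a' g = a g" "fewer_edges H a' a"
    and "\<forall>u\<in>H. s u \<in> H" "involution_on H a" "involution_on H a'"
  shows "is_bridge H s a' g"
proof -
  have "fewer_edges H (cut_edge a' g) (cut_edge a g)"
    using assms(2,3) by (auto simp: fewer_edges_def cut_edge_def)
  moreover have "\<not> connected_hes H s (cut_edge a g)" using assms(1) by (simp add: is_bridge_def)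
  ultimately have "\<not> connected_hes H s (cut_edge a' g)"
    using connected_hes_fewer_edges assms(4) cut_edge_in[OF assms(5)] by blast
  then show ?thesis using assms(1,2) by (simp add: is_bridge_def)
qed

lemma bridge_separating_set:
  assumes fin: "finite H" and s: "bij_betw s H H" and a: "involution_on H a"
    and con: "connected_hes H s a" and g: "g \<in> H" and br: "is_bridge H s a g"
  obtains S where "stable_set H s (cut_edge a g) S" "a g \<in> S" "g \<notin> S"
proof -
  let ?b = "cut_edge a g"
  have sH: "\<forall>u\<in>H. s u \<in> H" using s by (auto dest: bij_betwE)
  have b: "involution_on H ?b" using involution_on_cut_edge[OF a g] .
  have "\<not> connected_hes H s ?b" using br by (simp add: is_bridge_def)
  then obtain S where S: "stable_set H s ?b S" "S \<noteq> {}" "S \<noteq> H"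
    using connected_hes_stable_setI[OF sH] b by (meson involution_onD(1))
  have S': "stable_set H s ?b (H - S)" using stable_set_Diff[OF fin s b S(1)] .
  have ag: "a g \<in> H" "a (a g) = g" using a g by (auto dest: involution_onD)
  obtain T where T: "stable_set H s ?b T" "T \<noteq> H" "a g \<in> T"
  proof (cases "a g \<in> S")
    case False
    have "H - S \<noteq> H" using S(1,2) by (auto simp: stable_set_def)
    then show ?thesis using that S' False ag by blast
  qed (use that S in blast)
  have "g \<notin> T"
  proof
    assume "g \<in> T"
    then have "stable_set H s a T"
      using T ag unfolding stable_set_def cut_edge_def by (metis fun_upd_apply)
    then show False using connected_hes_stable_setD[OF con] T by blast
  qed
  then show ?thesis using that T by blast
qed

section \<open>The bridge first labelling of a rooted map\<close>

definition bfl_move :: "nat set \<Rightarrow> (nat \<Rightarrow> nat) \<Rightarrow> (nat \<Rightarrow> nat) \<times> nat \<Rightarrow> (nat \<Rightarrow> nat) \<times> nat" where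
  "bfl_move H s st = (let a = fst st; g = s (snd st) in
     if is_bridge H s a g then (a, a g)
     else if a g = g then (a, g)
     else (cut_edge a g, g))"

lemma bfl_step_eq_bfl_move: "bfl_step M = bfl_move (hes M) (sig M)"
  by (rule ext) (simp add: bfl_step_def bfl_move_def)

lemma bfl_move_cases:
  "fst (bfl_move H s (a, h)) = a \<or>
     (a (s h) \<noteq> s h \<and> \<not> is_bridge H s a (s h) \<and>
      fst (bfl_move H s (a, h)) = cut_edge a (s h) \<and> snd (bfl_move H s (a, h)) = s h)"
  by (simp add: bfl_move_def Let_def)

lemma fewer_edges_bfl_move: "fewer_edges H (fst (bfl_move H s (a, h))) a"
  using bfl_move_cases[of H s a h] fewer_edges_refl fewer_edges_cut_edge by metis

lemma exists_crossing: "P (0::nat) \<Longrightarrow> \<not> P n \<Longrightarrow> \<exists>k<n. P k \<and> \<not> P (Suc k)"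
  by (induction n) (auto intro: less_SucI)

lemma funpow_add_apply: "(f ^^ (m + n)) x = (f ^^ m) ((f ^^ n) x)"
  by (simp add: funpow_add)

lemma funpow_commute: "(f ^^ m) ((f ^^ n) x) = (f ^^ n) ((f ^^ m) x)"
  by (metis add.commute funpow_add_apply)

locale bfl_run =
  fixes H :: "nat set" and s :: "nat \<Rightarrow> nat" and a0 :: "nat \<Rightarrow> nat" and r :: nat
  assumes finite_H: "finite H" and bij_s: "bij_betw s H H" and involution_a0: "involution_on H a0"
    and root_in_H: "r \<in> H" and root_dangling: "a0 r = r" and connected_a0: "connected_hes H s a0"
begin

text \<open>After i moves the BFL sits at corner i, the corner with label i + 1.\<close>

definition run :: "nat \<Rightarrow> (nat \<Rightarrow> nat) \<times> nat" where
  "run i = (bfl_move H s ^^ i) (a0, r)"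

abbreviation alp_at :: "nat \<Rightarrow> nat \<Rightarrow> nat" where "alp_at i \<equiv> fst (run i)"
abbreviation corner :: "nat \<Rightarrow> nat" where "corner i \<equiv> snd (run i)"

lemma s_in_H: "u \<in> H \<Longrightarrow> s u \<in> H"
  using bij_s by (auto dest: bij_betwE)

lemma s_maps_H: "\<forall>u\<in>H. s u \<in> H"
  using s_in_H by blast

lemma run_0: "run 0 = (a0, r)"
  by (simp add: run_def)

lemma run_Suc: "run (Suc i) = bfl_move H s (run i)"
  by (simp add: run_def)

definition good_state :: "(nat \<Rightarrow> nat) \<times> nat \<Rightarrow> bool" where
  "good_state st \<longleftrightarrow> involution_on H (fst st) \<and> connected_hes H s (fst st)
     \<and> snd st \<in> H \<and> fst st r = r"

lemma good_state_bfl_move: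
  assumes "good_state (a, h)"
  shows "good_state (bfl_move H s (a, h))"
proof -
  have a: "involution_on H a" "connected_hes H s a" "h \<in> H" "a r = r"
    using assms by (auto simp: good_state_def)
  let ?g = "s h"
  have g: "?g \<in> H" "a ?g \<in> H" using a s_in_H by (auto dest: involution_onD)
  show ?thesis
  proof (cases "is_bridge H s a ?g \<or> a ?g = ?g")
    case True
    then show ?thesis using a g by (auto simp: bfl_move_def good_state_def Let_def)
  next
    case False
    then have con: "connected_hes H s (cut_edge a ?g)" unfolding is_bridge_def by blast
    have "r \<noteq> ?g" "r \<noteq> a ?g" using False a g by (metis involution_onD(2))+
    then have "cut_edge a ?g r = r" using a(4) by (simp add: cut_edge_def)
    then show ?thesis using False g con involution_on_cut_edge[OF a(1) g(1)]
      by (simp add: bfl_move_def good_state_def Let_def)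
  qed
qed

lemma good_state_run: "good_state (run i)"
proof (induction i)
  case 0
  then show ?case using involution_a0 connected_a0 root_in_H root_dangling
    by (simp add: run_0 good_state_def)
next
  case (Suc i)
  then show ?case using good_state_bfl_move[of "alp_at i" "corner i"] by (simp add: run_Suc)
qed

lemma involution_alp_at: "involution_on H (alp_at i)"
  and connected_alp_at: "connected_hes H s (alp_at i)"
  and corner_in_H: "corner i \<in> H"
  and alp_at_root: "alp_at i r = r"
  using good_state_run[of i] by (auto simp: good_state_def)

lemma s_corner_in_H: "s (corner i) \<in> H"
  using corner_in_H s_in_H by blast

lemma run_Suc_cases:
  "alp_at (Suc i) = alp_at i \<or>
     (alp_at i (s (corner i)) \<noteq> s (corner i) \<and> \<not> is_bridge H s (alp_at i) (s (corner i))
      \<and> alp_at (Suc i) = cut_edge (alp_at i) (s (corner i)) \<and> corner (Suc i) = s (corner i))"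
  using bfl_move_cases[of H s "alp_at i" "corner i"] by (simp add: run_Suc)

lemma fewer_edges_alp_at: "i \<le> j \<Longrightarrow> fewer_edges H (alp_at j) (alp_at i)"
proof (induction j rule: dec_induct)
  case (step j)
  have "fewer_edges H (alp_at (Suc j)) (alp_at j)"
    using fewer_edges_bfl_move[of H s "alp_at j" "corner j"] by (simp add: run_Suc)
  then show ?case using step.IH fewer_edges_trans by blast
qed (rule fewer_edges_refl)

lemma alp_at_dangling_mono: "i \<le> j \<Longrightarrow> u \<in> H \<Longrightarrow> alp_at i u = u \<Longrightarrow> alp_at j u = u"
  using fewer_edges_alp_at unfolding fewer_edges_def by metis

lemma is_bridge_alp_at_mono:
  assumes "i \<le> j" "g \<in> H" "is_bridge H s (alp_at i) g"
  shows "alp_at j g = alp_at i g \<and> is_bridge H s (alp_at j) g"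
  using assms(1)
proof (induction j rule: dec_induct)
  case (step j)
  then have b: "is_bridge H s (alp_at j) g" and e: "alp_at j g = alp_at i g" by auto
  have "alp_at (Suc j) g = alp_at j g"
  proof (cases "alp_at (Suc j) = alp_at j")
    case False
    let ?g = "s (corner j)"
    have c: "\<not> is_bridge H s (alp_at j) ?g" "alp_at (Suc j) = cut_edge (alp_at j) ?g"
      using run_Suc_cases[of j] False by auto
    have "g \<noteq> ?g" using b c by auto
    moreover have "g \<noteq> alp_at j ?g"
      using b c is_bridge_partner[of "alp_at j" g] involution_alp_at assms(2) s_corner_in_H
      by (metis involution_onD(2))
    ultimately show ?thesis using c(2) by (simp add: cut_edge_def)
  qed simp
  moreover have "fewer_edges H (alp_at (Suc j)) (alp_at j)" using fewer_edges_alp_at by simp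
  ultimately show ?case
    using is_bridge_fewer_edges[OF b] involution_alp_at s_in_H e by metis
qed (use assms in simp)

definition paired :: "nat \<Rightarrow> nat" where
  "paired i = card {u \<in> H. alp_at i u \<noteq> u}"

lemma paired_Suc: "paired (Suc i) \<le> paired i" "alp_at (Suc i) \<noteq> alp_at i \<Longrightarrow> paired (Suc i) < paired i"
proof -
  have sub: "{u \<in> H. alp_at (Suc i) u \<noteq> u} \<subseteq> {u \<in> H. alp_at i u \<noteq> u}"
    using fewer_edges_alp_at[of i "Suc i"] by (auto simp: fewer_edges_def)
  have fin: "finite {u \<in> H. alp_at i u \<noteq> u}" using finite_H by simp
  show "paired (Suc i) \<le> paired i" unfolding paired_def using card_mono[OF fin sub] .
  assume "alp_at (Suc i) \<noteq> alp_at i"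
  then have cut: "alp_at i (s (corner i)) \<noteq> s (corner i)"
    "alp_at (Suc i) = cut_edge (alp_at i) (s (corner i))"
    using run_Suc_cases[of i] by blast+
  then have "s (corner i) \<in> {u \<in> H. alp_at i u \<noteq> u} - {u \<in> H. alp_at (Suc i) u \<noteq> u}"
    using s_corner_in_H by (simp add: cut_edge_def)
  then show "paired (Suc i) < paired i"
    unfolding paired_def using psubset_card_mono[OF fin] sub by blast
qed

lemma paired_antimono: "i \<le> j \<Longrightarrow> paired j \<le> paired i"
proof (induction j rule: dec_induct)
  case (step j)
  then show ?case using paired_Suc(1)[of j] by linarith
qed simp

definition t_final :: nat where
  "t_final = arg_min paired (\<lambda>_. True)"

definition alp_final :: "nat \<Rightarrow> nat" where
  "alp_final = alp_at t_final"

lemma alp_at_final: "t_final \<le> j \<Longrightarrow> alp_at j = alp_final"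
proof (induction j rule: dec_induct)
  case (step j)
  have "paired j \<le> paired t_final" using paired_antimono step.hyps by blast
  moreover have "paired t_final \<le> paired (Suc j)"
    unfolding t_final_def by (rule arg_min_nat_le) simp
  ultimately have "alp_at (Suc j) = alp_at j" using paired_Suc(2)[of j] by fastforce
  then show ?case using step.IH by simp
qed (simp add: alp_final_def)

text \<open>Every move is already determined by the final working copy: a crossed bridge stays a
  bridge with the same partner, and a dangling or cut half-edge stays dangling.\<close>

lemma corner_Suc: "corner (Suc i) = alp_final (s (corner i))"
proof -
  let ?g = "s (corner i)" and ?j = "max (Suc i) t_final"
  have final: "alp_at ?j = alp_final" using alp_at_final by simp
  show ?thesis
  proof (cases "is_bridge H s (alp_at i) ?g")
    case True
    then have "corner (Suc i) = alp_at i ?g" by (simp add: run_Suc bfl_move_def Let_def)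
    then show ?thesis using is_bridge_alp_at_mono[OF _ s_corner_in_H True, of ?j] final by simp
  next
    case False
    then have "corner (Suc i) = ?g" "alp_at (Suc i) ?g = ?g"
      by (auto simp: run_Suc bfl_move_def Let_def cut_edge_def)
    then show ?thesis using alp_at_dangling_mono[of "Suc i" ?j ?g] s_corner_in_H final by simp
  qed
qed

lemma is_bridge_alp_final:
  assumes "alp_final (s (corner i)) \<noteq> s (corner i)"
  shows "is_bridge H s alp_final (s (corner i))"
proof -
  let ?g = "s (corner i)" and ?j = "max (Suc i) t_final"
  have final: "alp_at ?j = alp_final" using alp_at_final by simp
  have "is_bridge H s (alp_at i) ?g"
  proof (rule ccontr)
    assume "\<not> is_bridge H s (alp_at i) ?g"
    then have "alp_at (Suc i) ?g = ?g" by (auto simp: run_Suc bfl_move_def Let_def cut_edge_def)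
    then show False
      using alp_at_dangling_mono[of "Suc i" ?j ?g] s_corner_in_H final assms by simp
  qed
  then show ?thesis using is_bridge_alp_at_mono[of i ?j ?g] s_corner_in_H final by simp
qed

lemma involution_alp_final: "involution_on H alp_final"
  and connected_alp_final: "connected_hes H s alp_final"
  and alp_final_root: "alp_final r = r"
  using involution_alp_at connected_alp_at alp_at_root by (simp_all add: alp_final_def)

definition bfl_succ :: "nat \<Rightarrow> nat" where
  "bfl_succ = alp_final \<circ> s"

lemma corner_eq_funpow: "corner i = (bfl_succ ^^ i) r"
  by (induction i) (simp_all add: run_0 corner_Suc bfl_succ_def)

lemma bij_bfl_succ: "bij_betw bfl_succ H H"
  unfolding bfl_succ_def using bij_betw_trans[OF bij_s involution_on_bij[OF involution_alp_final]] .

lemma funpow_bfl_succ_in_H: "u \<in> H \<Longrightarrow> (bfl_succ ^^ n) u \<in> H"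
  using bij_betw_funpow[OF bij_bfl_succ] by (auto dest: bij_betwE)

lemma inj_on_funpow_bfl_succ: "inj_on (bfl_succ ^^ n) H"
  using bij_betw_funpow[OF bij_bfl_succ] bij_betw_imp_inj_on by blast

lemma funpow_bfl_succ_cancel:
  "(bfl_succ ^^ i) ((bfl_succ ^^ j) r) = (bfl_succ ^^ i) r \<Longrightarrow> (bfl_succ ^^ j) r = r"
  using inj_on_funpow_bfl_succ[of i] funpow_bfl_succ_in_H root_in_H unfolding inj_on_def by blast

lemma exists_period: "\<exists>p>0. (bfl_succ ^^ p) r = r"
proof -
  let ?f = "\<lambda>i. (bfl_succ ^^ i) r"
  have "?f ` {..card H} \<subseteq> H" using funpow_bfl_succ_in_H root_in_H by auto
  then have "card (?f ` {..card H}) \<le> card H" using finite_H by (simp add: card_mono)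
  then have "card (?f ` {..card H}) < card {..card H}" by simp
  then have "\<not> inj_on ?f {..card H}" using pigeonhole by blast
  then obtain i j where ij: "i < j" "?f i = ?f j"
    unfolding inj_on_def by (metis linorder_neqE_nat)
  then have "(bfl_succ ^^ i) ((bfl_succ ^^ (j - i)) r) = (bfl_succ ^^ i) r"
    using funpow_add_apply[where f=bfl_succ and m=i and n="j - i" and x=r] by simp
  then show ?thesis using ij(1) funpow_bfl_succ_cancel by (intro exI[of _ "j - i"]) simp
qed

definition period :: nat where
  "period = (LEAST p. 0 < p \<and> (bfl_succ ^^ p) r = r)"

lemma period_pos: "0 < period" and funpow_period: "(bfl_succ ^^ period) r = r"
  using LeastI_ex[OF exists_period] unfolding period_def by auto

lemma funpow_less_period: "0 < q \<Longrightarrow> q < period \<Longrightarrow> (bfl_succ ^^ q) r \<noteq> r"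
  using not_less_Least unfolding period_def by blast

lemma funpow_distinct: "i < j \<Longrightarrow> j < period \<Longrightarrow> (bfl_succ ^^ i) r \<noteq> (bfl_succ ^^ j) r"
proof
  assume ij: "i < j" "j < period" and e: "(bfl_succ ^^ i) r = (bfl_succ ^^ j) r"
  then have "(bfl_succ ^^ i) ((bfl_succ ^^ (j - i)) r) = (bfl_succ ^^ i) r"
    using funpow_add_apply[where f=bfl_succ and m=i and n="j - i" and x=r] by simp
  then have "(bfl_succ ^^ (j - i)) r = r" by (rule funpow_bfl_succ_cancel)
  then show False using funpow_less_period[of "j - i"] ij by simp
qed

lemma funpow_mod_period: "(bfl_succ ^^ i) r = (bfl_succ ^^ (i mod period)) r"
proof -
  have "(bfl_succ ^^ (q * period)) r = r" for q
    by (induction q) (simp_all add: funpow_add funpow_period)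
  moreover have "(bfl_succ ^^ i) r
      = (bfl_succ ^^ (i mod period)) ((bfl_succ ^^ (i div period * period)) r)"
    using funpow_add_apply[where f=bfl_succ and m="i mod period" and n="i div period * period" and x=r] by simp
  ultimately show ?thesis by simp
qed

definition orbit :: "nat set" where
  "orbit = (\<lambda>i. (bfl_succ ^^ i) r) ` {..<period}"

lemma funpow_in_orbit: "(bfl_succ ^^ i) r \<in> orbit"
  unfolding orbit_def using funpow_mod_period[of i] period_pos by auto

lemma orbit_subset: "orbit \<subseteq> H"
  unfolding orbit_def using funpow_bfl_succ_in_H root_in_H by auto

lemma card_orbit: "card orbit = period"
  unfolding orbit_def using funpow_distinct
  by (subst card_image) (auto simp: inj_on_def, metis linorder_neqE_nat)

lemma s_in_orbit:
  assumes h: "h \<in> orbit"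
  shows "s h \<in> orbit"
proof (rule ccontr)
  let ?g = "s h" and ?A = alp_final
  assume g: "?g \<notin> orbit"
  obtain i where hi: "h = (bfl_succ ^^ i) r" using h unfolding orbit_def by auto
  have "?A ?g \<noteq> ?g"
    using g funpow_in_orbit[of "Suc i"] hi by (auto simp: bfl_succ_def)
  then have "is_bridge H s ?A ?g"
    using is_bridge_alp_final[of i] corner_eq_funpow hi by simp
  then obtain S where S: "stable_set H s (cut_edge ?A ?g) S" "?A ?g \<in> S" "?g \<notin> S"
    using bridge_separating_set finite_H bij_s involution_alp_final connected_alp_final
      orbit_subset h s_in_H by blast
  have "h \<notin> S" using S by (auto simp: stable_set_def)
  let ?f = "\<lambda>k. (bfl_succ ^^ k) (bfl_succ h)"
  have "?f (period - 1) = (bfl_succ ^^ period) h"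
    using period_pos by (metis Suc_diff_1 comp_apply funpow_Suc_right)
  also have "\<dots> = (bfl_succ ^^ i) ((bfl_succ ^^ period) r)"
    using hi funpow_commute by metis
  finally have "?f (period - 1) = h" using funpow_period hi by simp
  moreover have "?f 0 \<in> S" using S(2) by (simp add: bfl_succ_def)
  ultimately obtain k where k: "?f k \<in> S" "?f (Suc k) \<notin> S"
    using exists_crossing[of "\<lambda>k. ?f k \<in> S" "period - 1"] \<open>h \<notin> S\<close> by auto
  have su: "s (?f k) \<in> S" using k(1) S(1) by (simp add: stable_set_def)
  have "s (?f k) = ?A ?g"
  proof (rule ccontr)
    assume "s (?f k) \<noteq> ?A ?g"
    then have "?f (Suc k) = cut_edge ?A ?g (s (?f k))"
      using su S(3) by (auto simp: bfl_succ_def cut_edge_def)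
    then show False using k(2) su S(1) by (simp add: stable_set_def)
  qed
  moreover have "?g \<in> H" using s_in_H orbit_subset h by blast
  ultimately have "?f (Suc k) = ?g"
    using involution_alp_final by (simp add: bfl_succ_def involution_onD)
  moreover have "?f (Suc k) = (bfl_succ ^^ (Suc (Suc k) + i)) r"
    using hi by (simp add: funpow_add funpow_swap1)
  ultimately show False using g funpow_in_orbit by metis
qed

lemma alp_final_in_orbit:
  assumes u: "u \<in> orbit"
  shows "alp_final u \<in> orbit"
proof -
  obtain i where i: "u = (bfl_succ ^^ i) r" using u unfolding orbit_def by auto
  define v where "v = (bfl_succ ^^ (i + period - 1)) r"
  have "bfl_succ v = (bfl_succ ^^ (i + period)) r"
    using period_pos unfolding v_def by (metis Suc_diff_1 add_gr_0 funpow.simps(2) o_apply)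
  also have "\<dots> = u" using i funpow_period by (simp add: funpow_add)
  finally have "alp_final u = s v"
    using involution_alp_final funpow_bfl_succ_in_H root_in_H s_in_H
    unfolding v_def bfl_succ_def by (auto simp: involution_onD)
  then show ?thesis using s_in_orbit funpow_in_orbit v_def by simp
qed

lemma orbit_eq_H: "orbit = H"
proof -
  have "stable_set H s alp_final orbit"
    using orbit_subset s_in_orbit alp_final_in_orbit by (simp add: stable_set_def)
  then show ?thesis using connected_hes_stable_setD[OF connected_alp_final] funpow_in_orbit by blast
qed

lemma period_eq_card: "period = card H"
  using card_orbit orbit_eq_H by simp

lemma card_H_pos: "0 < card H"
  using period_pos period_eq_card by simp

lemma corner_0: "corner 0 = r"
  by (simp add: run_0)

lemma corner_card: "corner (card H) = r"
  using funpow_period period_eq_card corner_eq_funpow by simp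

lemma corner_distinct: "i < j \<Longrightarrow> j < card H \<Longrightarrow> corner i \<noteq> corner j"
  using funpow_distinct period_eq_card corner_eq_funpow by simp

lemma corner_ne_root: "0 < j \<Longrightarrow> j < card H \<Longrightarrow> corner j \<noteq> r"
  using corner_distinct[of 0 j] corner_0 by simp

lemma s_corner_ne_root: "Suc j < card H \<Longrightarrow> s (corner j) \<noteq> r"
  using corner_Suc alp_final_root corner_ne_root[of "Suc j"] by fastforce

lemma s_corner_last: "s (corner (card H - 1)) = r"
proof -
  have "alp_final (s (corner (card H - 1))) = r"
    using corner_Suc[of "card H - 1"] corner_card card_H_pos by simp
  then show ?thesis
    using involution_alp_final s_corner_in_H alp_final_root by (metis involution_onD(2))
qed

end

section \<open>The labelling after adding a root edge\<close>

definition root_edge_sig :: "(nat \<Rightarrow> nat) \<Rightarrow> nat \<Rightarrow> nat \<Rightarrow> nat \<Rightarrow> nat \<Rightarrow> nat \<Rightarrow> nat" where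
  "root_edge_sig s r c x y =
     (if c = r then s(r := x, x := y, y := s r) else s(r := x, x := s r, c := y, y := s c))"

context
  fixes H :: "nat set" and s :: "nat \<Rightarrow> nat" and r c x y :: nat
  assumes x: "x \<notin> H" and y: "y \<notin> H" and xy: "x \<noteq> y" and r: "r \<in> H" and c: "c \<in> H"
begin

lemma root_edge_sig_root: "root_edge_sig s r c x y r = x"
  and root_edge_sig_x: "root_edge_sig s r c x y x = (if c = r then y else s r)"
  and root_edge_sig_y: "root_edge_sig s r c x y y = s c"
  and root_edge_sig_corner: "c \<noteq> r \<Longrightarrow> root_edge_sig s r c x y c = y"
  and root_edge_sig_other: "u \<in> H \<Longrightarrow> u \<noteq> r \<Longrightarrow> u \<noteq> c \<Longrightarrow> root_edge_sig s r c x y u = s u"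
  using x y xy r c by (auto simp: root_edge_sig_def)

lemma stable_set_root_edge_sig:
  assumes S: "stable_set (H \<union> {x, y}) (root_edge_sig s r c x y) b S"
  shows "r \<in> S \<Longrightarrow> x \<in> S \<and> s r \<in> S" and "c \<in> S \<Longrightarrow> y \<in> S \<and> s c \<in> S"
proof -
  have cl: "u \<in> S \<Longrightarrow> root_edge_sig s r c x y u \<in> S" for u
    using S by (simp add: stable_set_def)
  show "c \<in> S \<Longrightarrow> y \<in> S \<and> s c \<in> S"
    using cl[of c] cl[of x] cl[of y] cl[of r] root_edge_sig_root root_edge_sig_x root_edge_sig_y
      root_edge_sig_corner by (cases "c = r") auto
  show "r \<in> S \<Longrightarrow> x \<in> S \<and> s r \<in> S"
    using cl[of x] cl[of y] cl[of r] root_edge_sig_root root_edge_sig_x root_edge_sig_y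
    by (cases "c = r") auto
qed

context
  fixes a :: "nat \<Rightarrow> nat"
  assumes sH: "\<forall>u\<in>H. s u \<in> H" and aH: "\<forall>u\<in>H. a u \<in> H"
begin

lemma connected_hes_root_edge_sigD:
  assumes con: "connected_hes (H \<union> {x, y}) (root_edge_sig s r c x y) (a(x := x, y := y))"
  shows "connected_hes H s a"
proof (rule connected_hes_stable_setI[OF sH aH])
  fix S assume S: "stable_set H s a S" "S \<noteq> {}"
  have SH: "S \<subseteq> H" using S by (simp add: stable_set_def)
  define S' where "S' = S \<union> (if r \<in> S then {x} else {}) \<union> (if c \<in> S then {y} else {})"
  have "root_edge_sig s r c x y u \<in> S'" if u: "u \<in> S'" for u
  proof -
    consider "u \<in> S" "u \<noteq> r" "u \<noteq> c" | "u = r" "r \<in> S" | "u = c" "c \<in> S" "c \<noteq> r"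
      | "u = x" "r \<in> S" | "u = y" "c \<in> S"
      using u unfolding S'_def by (auto split: if_splits)
    then show ?thesis
      using S(1) SH root_edge_sig_root root_edge_sig_x root_edge_sig_y root_edge_sig_corner
        root_edge_sig_other
      by cases (auto simp: S'_def stable_set_def subset_iff)
  qed
  moreover have "(a(x := x, y := y)) u \<in> S'" if "u \<in> S'" for u
    using that S(1) SH x y unfolding S'_def stable_set_def by (auto split: if_splits)
  moreover have "S' \<subseteq> H \<union> {x, y}" using SH unfolding S'_def by auto
  ultimately have "stable_set (H \<union> {x, y}) (root_edge_sig s r c x y) (a(x := x, y := y)) S'"
    by (simp add: stable_set_def)
  then have "S' = H \<union> {x, y}" using connected_hes_stable_setD[OF con] S(2) S'_def by blast
  then show "S = H" using x y SH unfolding S'_def by (auto split: if_splits)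
qed

lemma connected_hes_root_edge_sigI:
  assumes con: "connected_hes H s a"
  shows "connected_hes (H \<union> {x, y}) (root_edge_sig s r c x y) (a(x := x, y := y))"
proof (rule connected_hes_stable_setI)
  show "\<forall>u\<in>H \<union> {x, y}. root_edge_sig s r c x y u \<in> H \<union> {x, y}"
    using sH r c by (auto simp: root_edge_sig_def)
  show "\<forall>u\<in>H \<union> {x, y}. (a(x := x, y := y)) u \<in> H \<union> {x, y}" using aH by auto
next
  fix S assume S: "stable_set (H \<union> {x, y}) (root_edge_sig s r c x y) (a(x := x, y := y)) S"
    and ne: "S \<noteq> {}"
  note rc = stable_set_root_edge_sig[OF S]
  have cl: "u \<in> S \<Longrightarrow> root_edge_sig s r c x y u \<in> S" "u \<in> S \<Longrightarrow> (a(x := x, y := y)) u \<in> S" for u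
    using S by (auto simp: stable_set_def)
  have SH: "S \<subseteq> H \<union> {x, y}" using S by (simp add: stable_set_def)
  have "s u \<in> S \<inter> H" if u: "u \<in> S \<inter> H" for u
    using u rc cl(1)[of u] root_edge_sig_other[of u] sH by (cases "u = r \<or> u = c") auto
  moreover have "a u \<in> S \<inter> H" if u: "u \<in> S \<inter> H" for u
    using u cl(2)[of u] x y aH by (auto split: if_splits)
  ultimately have "stable_set H s a (S \<inter> H)" by (auto simp: stable_set_def)
  moreover have "S \<inter> H \<noteq> {}"
  proof
    assume e: "S \<inter> H = {}"
    obtain u where "u \<in> S" using ne by auto
    then have "u = x \<or> u = y" using e SH by auto
    then have "s r \<in> S \<or> s c \<in> S"
      using \<open>u \<in> S\<close> cl(1)[of x] cl(1)[of y] root_edge_sig_x root_edge_sig_y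
      by (cases "c = r") auto
    then show False using e sH r c by auto
  qed
  ultimately have "S \<inter> H = H" using connected_hes_stable_setD[OF con] by blast
  then show "S = H \<union> {x, y}" using rc r c SH by auto
qed

lemma connected_hes_root_edge_sig_iff:
  "connected_hes (H \<union> {x, y}) (root_edge_sig s r c x y) (a(x := x, y := y)) \<longleftrightarrow> connected_hes H s a"
  using connected_hes_root_edge_sigD connected_hes_root_edge_sigI by blast

end

end

lemma fresh_gt: "finite H \<Longrightarrow> u \<in> H \<Longrightarrow> u < fresh H"
  unfolding fresh_def by (simp add: le_imp_less_Suc)

lemma fresh_notin: "finite H \<Longrightarrow> fresh H \<notin> H"
  using fresh_gt by blast

lemma fresh_eqI: "finite S \<Longrightarrow> m \<in> S \<Longrightarrow> (\<And>u. u \<in> S \<Longrightarrow> u \<le> m) \<Longrightarrow> fresh S = Suc m"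
  unfolding fresh_def by (metis Max_eqI finite_insert insertE insertI2 le0)

locale bfl_run_root_edge = bfl_run +
  fixes k :: nat
  assumes k_pos: "1 \<le> k" and k_le: "k \<le> card H"
begin

definition "c_R = corner (k - 1)"
definition "x_R = fresh H"
definition "y_R = Suc x_R"
definition "H_R = H \<union> {x_R, y_R}"
definition "s_R = root_edge_sig s r c_R x_R y_R"
definition "a_R = a0(x_R := y_R, y_R := x_R)"
definition "run_R i = (bfl_move H_R s_R ^^ i) (a_R, r)"

lemma x_R_notin: "x_R \<notin> H"
  unfolding x_R_def using fresh_notin finite_H by blast

lemma y_R_notin: "y_R \<notin> H"
  unfolding y_R_def x_R_def using fresh_gt[OF finite_H] by fastforce

lemma x_R_ne_y_R: "x_R \<noteq> y_R"
  unfolding y_R_def by simp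

lemma c_R_in_H: "c_R \<in> H"
  unfolding c_R_def by (rule corner_in_H)

lemmas s_R_simps =
  root_edge_sig_root[where H=H and s=s and r=r and c=c_R and x=x_R and y=y_R, OF x_R_notin y_R_notin x_R_ne_y_R root_in_H c_R_in_H, folded s_R_def]
  root_edge_sig_x[where H=H and s=s and r=r and c=c_R and x=x_R and y=y_R, OF x_R_notin y_R_notin x_R_ne_y_R root_in_H c_R_in_H, folded s_R_def]
  root_edge_sig_y[where H=H and s=s and r=r and c=c_R and x=x_R and y=y_R, OF x_R_notin y_R_notin x_R_ne_y_R root_in_H c_R_in_H, folded s_R_def]
  root_edge_sig_corner[where H=H and s=s and r=r and c=c_R and x=x_R and y=y_R, OF x_R_notin y_R_notin x_R_ne_y_R root_in_H c_R_in_H, folded s_R_def]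
  root_edge_sig_other[where H=H and s=s and r=r and c=c_R and x=x_R and y=y_R, OF x_R_notin y_R_notin x_R_ne_y_R root_in_H c_R_in_H, folded s_R_def]

lemma run_R_Suc: "run_R (Suc i) = bfl_move H_R s_R (run_R i)"
  by (simp add: run_R_def)

lemma connected_hes_R_iff:
  "\<forall>u\<in>H. a u \<in> H \<Longrightarrow> connected_hes H_R s_R (a(x_R := x_R, y_R := y_R)) \<longleftrightarrow> connected_hes H s a"
  unfolding H_R_def s_R_def
  using connected_hes_root_edge_sig_iff[OF x_R_notin y_R_notin x_R_ne_y_R root_in_H c_R_in_H s_maps_H]
  by blast

text \<open>Once the new edge is cut, a move of the extended map that looks at a half-edge of the
  original map is a move of the original map.\<close>

lemma bfl_move_R:
  assumes a: "involution_on H (fst st)" and h: "snd st \<in> H" and u: "s_R u = s (snd st)"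
  shows "bfl_move H_R s_R ((fst st)(x_R := x_R, y_R := y_R), u)
    = ((fst (bfl_move H s st))(x_R := x_R, y_R := y_R), snd (bfl_move H s st))"
proof -
  obtain a h where st: "st = (a, h)" by fastforce
  let ?g = "s h"
  have g: "?g \<in> H" "a ?g \<in> H" using h s_in_H a st by (auto dest: involution_onD)
  then have g_new: "?g \<noteq> x_R" "?g \<noteq> y_R" "a ?g \<noteq> x_R" "a ?g \<noteq> y_R"
    using x_R_notin y_R_notin by auto
  have cut: "cut_edge (a(x_R := x_R, y_R := y_R)) ?g = (cut_edge a ?g)(x_R := x_R, y_R := y_R)"
    using g_new by (auto simp: cut_edge_def fun_eq_iff)
  have "is_bridge H_R s_R (a(x_R := x_R, y_R := y_R)) ?g = is_bridge H s a ?g"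
    unfolding is_bridge_def cut using g_new connected_hes_R_iff cut_edge_in a st by simp
  then show ?thesis using u g_new cut st by (simp add: bfl_move_def Let_def)
qed

lemma bfl_move_R_run:
  "s_R u = s (corner j) \<Longrightarrow> bfl_move H_R s_R ((alp_at j)(x_R := x_R, y_R := y_R), u)
    = ((alp_at (Suc j))(x_R := x_R, y_R := y_R), corner (Suc j))"
  using bfl_move_R[of "run j" u] involution_alp_at corner_in_H by (simp add: run_Suc)

lemma run_R_1: "run_R 1 = (a0(x_R := x_R, y_R := y_R), x_R)"
proof -
  have cut: "cut_edge a_R x_R = a0(x_R := x_R, y_R := y_R)"
    unfolding cut_edge_def a_R_def using x_R_ne_y_R by (auto simp: fun_eq_iff)
  have "connected_hes H_R s_R (cut_edge a_R x_R)"
    unfolding cut using connected_hes_R_iff connected_a0 involution_a0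
    by (meson involution_onD(1))
  then have "\<not> is_bridge H_R s_R a_R x_R" by (simp add: is_bridge_def)
  then show ?thesis
    using x_R_ne_y_R cut s_R_simps(1) by (simp add: run_R_def bfl_move_def Let_def a_R_def)
qed

lemma c_R_ne_root: "2 \<le> k \<Longrightarrow> c_R \<noteq> r"
  unfolding c_R_def using corner_ne_root[of "k - 1"] k_le by simp

lemma run_R_before:
  "1 \<le> j \<Longrightarrow> j \<le> k - 1 \<Longrightarrow> run_R (Suc j) = ((alp_at j)(x_R := x_R, y_R := y_R), corner j)"
proof (induction j rule: dec_induct)
  case base
  have "s_R x_R = s (corner 0)" using c_R_ne_root base s_R_simps(2) by (simp add: corner_0)
  have "run_R (Suc 1) = bfl_move H_R s_R ((alp_at 0)(x_R := x_R, y_R := y_R), x_R)"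
    using run_R_1 by (simp only: run_R_Suc run_0 fst_conv)
  also have "\<dots> = ((alp_at 1)(x_R := x_R, y_R := y_R), corner 1)"
    using bfl_move_R_run \<open>s_R x_R = s (corner 0)\<close> by simp
  finally show ?case .
next
  case (step j)
  have "corner j \<noteq> r" using corner_ne_root[of j] step k_le by simp
  moreover have "corner j \<noteq> c_R"
    unfolding c_R_def using corner_distinct[of j "k - 1"] step k_le by simp
  ultimately have "s_R (corner j) = s (corner j)" using s_R_simps(5) corner_in_H by simp
  moreover have "run_R (Suc (Suc j)) = bfl_move H_R s_R ((alp_at j)(x_R := x_R, y_R := y_R), corner j)"
    using step by (simp only: run_R_Suc)
  ultimately show ?case by (simp only: bfl_move_R_run)
qed

lemma run_R_y: "run_R (k + 1) = ((alp_at (k - 1))(x_R := x_R, y_R := y_R), y_R)"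
proof -
  have "run_R k = ((alp_at (k - 1))(x_R := x_R, y_R := y_R), if k = 1 then x_R else corner (k - 1))"
    using run_R_1 run_R_before[of "k - 1"] k_pos by (cases "k = 1") (simp_all add: run_0)
  moreover have "s_R (if k = 1 then x_R else corner (k - 1)) = y_R"
    using s_R_simps(2,4) c_R_ne_root c_R_def corner_0 k_pos by (cases "k = 1") auto
  moreover have "\<not> is_bridge H_R s_R ((alp_at (k - 1))(x_R := x_R, y_R := y_R)) y_R"
    by (simp add: is_bridge_def)
  ultimately show ?thesis
    using run_R_Suc[of k] by (simp add: bfl_move_def Let_def)
qed

lemma run_R_after:
  "k \<le> j \<Longrightarrow> j \<le> card H \<Longrightarrow> run_R (j + 2) = ((alp_at j)(x_R := x_R, y_R := y_R), corner j)"
proof (induction j rule: dec_induct)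
  case base
  have "run_R (k + 2) = bfl_move H_R s_R ((alp_at (k - 1))(x_R := x_R, y_R := y_R), y_R)"
    using run_R_y by (simp add: run_R_Suc[of "k + 1", simplified])
  also have "\<dots> = ((alp_at k)(x_R := x_R, y_R := y_R), corner k)"
    using bfl_move_R_run[of y_R "k - 1"] s_R_simps(3) c_R_def k_pos by simp
  finally show ?case .
next
  case (step j)
  have "corner j \<noteq> r" using corner_ne_root[of j] step k_pos by simp
  moreover have "corner (k - 1) \<noteq> corner j" using corner_distinct[of "k - 1" j] step k_pos by simp
  then have "corner j \<noteq> c_R" unfolding c_R_def by metis
  ultimately have "s_R (corner j) = s (corner j)" using s_R_simps(5) corner_in_H by simp
  moreover have "run_R (Suc j + 2) = bfl_move H_R s_R ((alp_at j)(x_R := x_R, y_R := y_R), corner j)"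
    using step by (simp only: run_R_Suc add_Suc)
  ultimately have "run_R (Suc (Suc (Suc j))) = ((alp_at (Suc j))(x_R := x_R, y_R := y_R), corner (Suc j))"
    using bfl_move_R_run by simp
  then show ?case by (simp only: add_2_eq_Suc')
qed

end

section \<open>The labelling after inserting a map\<close>

locale bfl_run_insertion = N: bfl_run H s a0 r + M: bfl_run HM sM aM0 rM
  for H s a0 r HM sM aM0 rM +
  fixes l :: nat
  assumes l_pos: "1 \<le> l" and l_le: "l \<le> card H"
begin

definition "c_I = N.corner (l - 1)"
definition "off = fresh H"
definition "copy = (\<lambda>u. off + u) ` HM"
definition "z = off + fresh HM"
definition "H_I = H \<union> copy \<union> {z}"
definition "s_I = (\<lambda>u. if u \<in> copy then off + sM (u - off)
                  else if u = c_I then z else if u = z then s c_I else s u)"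
definition "glue aA aB = (\<lambda>u. if u = off + rM then z
                  else if u \<in> copy then off + aB (u - off)
                  else if u = z then off + rM else aA u)"
definition "run_I i = (bfl_move H_I s_I ^^ i) (glue a0 aM0, r)"

lemma c_I_in_H: "c_I \<in> H"
  unfolding c_I_def by (rule N.corner_in_H)

lemma copy_notin_H: "u \<in> copy \<Longrightarrow> u \<notin> H"
  unfolding copy_def off_def using fresh_gt[OF N.finite_H] by fastforce

lemma z_notin_H: "z \<notin> H"
  unfolding z_def off_def using fresh_gt[OF N.finite_H] by fastforce

lemma z_notin_copy: "z \<notin> copy"
  unfolding z_def copy_def using fresh_notin[OF M.finite_H] by auto

lemma off_in_copy_iff: "off + v \<in> copy \<longleftrightarrow> v \<in> HM"
  unfolding copy_def by auto

lemma copyE: "u \<in> copy \<Longrightarrow> (\<And>v. u = off + v \<Longrightarrow> v \<in> HM \<Longrightarrow> P) \<Longrightarrow> P"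
  unfolding copy_def by auto

lemma root_copy_in_copy: "off + rM \<in> copy"
  using off_in_copy_iff M.root_in_H by simp

lemma s_I_host: "u \<in> H \<Longrightarrow> u \<noteq> c_I \<Longrightarrow> s_I u = s u"
  and s_I_c_I: "s_I c_I = z"
  and s_I_z: "s_I z = s c_I"
  and s_I_copy: "v \<in> HM \<Longrightarrow> s_I (off + v) = off + sM v"
  unfolding s_I_def using copy_notin_H z_notin_H z_notin_copy c_I_in_H off_in_copy_iff by auto

lemma glue_host: "u \<in> H \<Longrightarrow> glue aA aB u = aA u"
  and glue_root: "glue aA aB (off + rM) = z"
  and glue_z: "glue aA aB z = off + rM"
  and glue_copy: "v \<in> HM \<Longrightarrow> v \<noteq> rM \<Longrightarrow> glue aA aB (off + v) = off + aB v"
  unfolding glue_def using copy_notin_H z_notin_H z_notin_copy root_copy_in_copy off_in_copy_iff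
  by (metis, simp, auto)

lemma s_I_maps: "\<forall>u\<in>H_I. s_I u \<in> H_I"
proof
  fix u assume "u \<in> H_I"
  then consider "u \<in> H" | v where "u = off + v" "v \<in> HM" | "u = z"
    unfolding H_I_def by (auto elim: copyE)
  then show "s_I u \<in> H_I"
  proof cases
    case 1
    then show ?thesis using s_I_host s_I_c_I N.s_in_H by (cases "u = c_I") (auto simp: H_I_def)
  qed (use s_I_z s_I_copy N.s_in_H M.s_in_H c_I_in_H off_in_copy_iff in \<open>auto simp: H_I_def\<close>)
qed

context
  fixes aA aB :: "nat \<Rightarrow> nat"
  assumes aA: "\<forall>u\<in>H. aA u \<in> H" and aB: "\<forall>u\<in>HM. aB u \<in> HM"
begin

lemma glue_maps: "\<forall>u\<in>H_I. glue aA aB u \<in> H_I"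
proof
  fix u assume "u \<in> H_I"
  then consider "u \<in> H" | "u = off + rM" | v where "u = off + v" "v \<in> HM" "v \<noteq> rM" | "u = z"
    unfolding H_I_def by (auto elim: copyE)
  then show "glue aA aB u \<in> H_I"
    by cases (use glue_host glue_root glue_copy glue_z aA aB off_in_copy_iff root_copy_in_copy in
      \<open>auto simp: H_I_def\<close>)
qed

lemma connected_hes_glue_host:
  assumes con: "connected_hes H_I s_I (glue aA aB)"
  shows "connected_hes H s aA"
proof (rule connected_hes_stable_setI[OF N.s_maps_H aA])
  fix S assume S: "stable_set H s aA S" "S \<noteq> {}"
  have SH: "S \<subseteq> H" using S by (simp add: stable_set_def)
  define S' where "S' = S \<union> (if c_I \<in> S then copy \<union> {z} else {})"
  have "s_I u \<in> S' \<and> glue aA aB u \<in> S'" if u: "u \<in> S'" for u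
  proof -
    consider "u \<in> S" | v where "c_I \<in> S" "u = off + v" "v \<in> HM" | "c_I \<in> S" "u = z"
      using u unfolding S'_def by (auto split: if_splits elim: copyE)
    then show ?thesis
    proof cases
      case 1
      then show ?thesis
        using S(1) SH s_I_host s_I_c_I glue_host
        by (cases "u = c_I") (auto simp: S'_def stable_set_def subset_iff)
    next
      case (2 v)
      then show ?thesis
        using s_I_copy glue_root glue_copy M.s_in_H aB off_in_copy_iff
        by (cases "v = rM") (auto simp: S'_def)
    next
      case 3
      then show ?thesis
        using s_I_z glue_z S(1) root_copy_in_copy by (auto simp: S'_def stable_set_def)
    qed
  qed
  then have "stable_set H_I s_I (glue aA aB) S'"
    using SH unfolding stable_set_def S'_def H_I_def by auto
  then have "H \<subseteq> S'" using connected_hes_stable_setD[OF con] S(2) S'_def H_I_def by blast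
  then show "S = H" using SH copy_notin_H z_notin_H unfolding S'_def by (auto split: if_splits)
qed

lemma connected_hes_glue_guest:
  assumes con: "connected_hes H_I s_I (glue aA aB)"
  shows "connected_hes HM sM aB"
proof (rule connected_hes_stable_setI[OF M.s_maps_H aB])
  fix S assume S: "stable_set HM sM aB S" "S \<noteq> {}"
  have SH: "S \<subseteq> HM" using S by (simp add: stable_set_def)
  define S' where "S' = (\<lambda>v. off + v) ` S \<union> (if rM \<in> S then H \<union> {z} else {})"
  have "s_I u \<in> S' \<and> glue aA aB u \<in> S'" if u: "u \<in> S'" for u
  proof -
    consider v where "u = off + v" "v \<in> S" | "rM \<in> S" "u \<in> H" | "rM \<in> S" "u = z"
      using u unfolding S'_def by (auto split: if_splits)
    then show ?thesis
    proof cases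
      case (1 v)
      then have "v \<in> HM" "sM v \<in> S" "aB v \<in> S" using S(1) SH by (auto simp: stable_set_def)
      then show ?thesis
        using 1 s_I_copy glue_root glue_copy by (cases "v = rM") (auto simp: S'_def)
    next
      case 2
      then show ?thesis
        using s_I_host s_I_c_I glue_host N.s_in_H aA by (cases "u = c_I") (auto simp: S'_def)
    next
      case 3
      then show ?thesis using s_I_z glue_z N.s_in_H c_I_in_H by (auto simp: S'_def)
    qed
  qed
  moreover have "S' \<subseteq> H_I" using SH unfolding S'_def H_I_def copy_def by auto
  ultimately have "stable_set H_I s_I (glue aA aB) S'" by (simp add: stable_set_def)
  then have "copy \<subseteq> S'" using connected_hes_stable_setD[OF con] S(2) S'_def H_I_def by blast
  then have "copy \<subseteq> (\<lambda>v. off + v) ` S"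
    using copy_notin_H z_notin_copy unfolding S'_def by (auto split: if_splits)
  then show "S = HM" using SH unfolding copy_def by auto
qed

lemma connected_hes_glueI:
  assumes conA: "connected_hes H s aA" and conB: "connected_hes HM sM aB" and aBr: "aB rM = rM"
  shows "connected_hes H_I s_I (glue aA aB)"
proof (rule connected_hes_stable_setI[OF s_I_maps glue_maps])
  fix S assume S: "stable_set H_I s_I (glue aA aB) S" "S \<noteq> {}"
  have cl: "u \<in> S \<Longrightarrow> s_I u \<in> S" "u \<in> S \<Longrightarrow> glue aA aB u \<in> S" for u
    using S(1) by (auto simp: stable_set_def)
  let ?SA = "S \<inter> H" and ?SB = "{v \<in> HM. off + v \<in> S}"
  have "s u \<in> ?SA" if u: "u \<in> ?SA" for u
    using u cl(1)[of u] cl(1)[of z] s_I_host[of u] s_I_c_I s_I_z N.s_in_H by (cases "u = c_I") auto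
  moreover have "aA u \<in> ?SA" if u: "u \<in> ?SA" for u
    using u cl(2)[of u] glue_host aA by auto
  ultimately have stA: "stable_set H s aA ?SA" by (auto simp: stable_set_def)
  have "sM v \<in> ?SB" if v: "v \<in> ?SB" for v
    using v cl(1)[of "off + v"] s_I_copy M.s_in_H by auto
  moreover have "aB v \<in> ?SB" if v: "v \<in> ?SB" for v
    using v cl(2)[of "off + v"] glue_copy aB aBr by (cases "v = rM") auto
  ultimately have stB: "stable_set HM sM aB ?SB" by (auto simp: stable_set_def)
  have A_full_iff_B_full: "?SA = H \<longleftrightarrow> ?SB = HM"
  proof
    assume "?SA = H"
    then have "off + rM \<in> S" using c_I_in_H cl s_I_c_I glue_z by (metis IntE)
    then show "?SB = HM" using connected_hes_stable_setD[OF conB stB] M.root_in_H by blast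
  next
    assume "?SB = HM"
    then have "s c_I \<in> S" using M.root_in_H cl glue_root s_I_z by (metis (mono_tags, lifting) mem_Collect_eq)
    then show "?SA = H" using connected_hes_stable_setD[OF conA stA] N.s_in_H c_I_in_H by blast
  qed
  have "?SA \<noteq> {} \<or> ?SB \<noteq> {}"
  proof -
    obtain u where u: "u \<in> S" using S(2) by auto
    then consider "u \<in> H" | v where "u = off + v" "v \<in> HM" | "u = z"
      using S(1) unfolding stable_set_def H_I_def by (auto elim: copyE)
    then show ?thesis
      by cases (use u cl(1)[of u] s_I_z N.s_in_H c_I_in_H in auto)
  qed
  then have full: "?SA = H" "?SB = HM"
    using A_full_iff_B_full connected_hes_stable_setD[OF conA stA] connected_hes_stable_setD[OF conB stB]
    by blast+
  then have "z \<in> S" using c_I_in_H cl(1) s_I_c_I by (metis IntE)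
  then show "S = H_I" using full S(1) unfolding H_I_def copy_def stable_set_def by auto
qed

lemma connected_hes_glue_iff:
  "aB rM = rM \<Longrightarrow>
    connected_hes H_I s_I (glue aA aB) \<longleftrightarrow> connected_hes H s aA \<and> connected_hes HM sM aB"
  using connected_hes_glue_host connected_hes_glue_guest connected_hes_glueI by blast

end

lemma run_I_Suc: "run_I (Suc i) = bfl_move H_I s_I (run_I i)"
  by (simp add: run_I_def)

lemma is_bridge_glue_z:
  assumes aA: "\<forall>u\<in>H. aA u \<in> H" and aB: "\<forall>u\<in>HM. aB u \<in> HM"
  shows "is_bridge H_I s_I (glue aA aB) z"
proof -
  let ?b = "cut_edge (glue aA aB) z"
  have b: "?b z = z" "?b (off + rM) = off + rM"
    "u \<noteq> z \<Longrightarrow> u \<noteq> off + rM \<Longrightarrow> ?b u = glue aA aB u" for u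
    using glue_z by (auto simp: cut_edge_def)
  have "?b u \<in> H_I" if "u \<in> H_I" for u
    using that b glue_maps[OF aA aB] by (cases "u = z \<or> u = off + rM") auto
  moreover have "stable_set H_I s_I ?b copy"
  proof -
    have "s_I u \<in> copy \<and> ?b u \<in> copy" if "u \<in> copy" for u
      using that
    proof (rule copyE)
      fix v assume v: "u = off + v" "v \<in> HM"
      then have "u \<noteq> z" using off_in_copy_iff z_notin_copy by metis
      then show ?thesis
        using v s_I_copy M.s_in_H aB off_in_copy_iff b glue_copy root_copy_in_copy
        by (cases "v = rM") auto
    qed
    then show ?thesis unfolding stable_set_def H_I_def by auto
  qed
  moreover have "copy \<noteq> {}" "copy \<noteq> H_I"
    using root_copy_in_copy z_notin_copy unfolding H_I_def by auto
  ultimately have "\<not> connected_hes H_I s_I ?b"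
    using connected_hes_stable_setD by blast
  moreover have "glue aA aB z \<noteq> z" using glue_z root_copy_in_copy z_notin_copy by auto
  ultimately show ?thesis by (simp add: is_bridge_def)
qed

lemma bfl_move_glue_host:
  assumes "involution_on H (fst st)" "snd st \<in> H" "s_I u = s (snd st)"
    and "involution_on HM aB" "connected_hes HM sM aB" "aB rM = rM"
  shows "bfl_move H_I s_I (glue (fst st) aB, u)
    = (glue (fst (bfl_move H s st)) aB, snd (bfl_move H s st))"
proof -
  obtain a h where st: "st = (a, h)" by fastforce
  let ?g = "s h"
  have g: "?g \<in> H" "a ?g \<in> H" using assms(1,2) N.s_in_H st by (auto dest: involution_onD)
  have glue_g: "glue a aB ?g = a ?g" using glue_host g by simp
  have cut: "cut_edge (glue a aB) ?g = glue (cut_edge a ?g) aB"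
    unfolding cut_edge_def glue_def using g copy_notin_H z_notin_H root_copy_in_copy
    by (auto simp: fun_eq_iff)
  have "\<forall>u\<in>H. cut_edge a ?g u \<in> H" "\<forall>u\<in>HM. aB u \<in> HM"
    using cut_edge_in assms(1,4) st by (auto dest: involution_onD)
  then have "is_bridge H_I s_I (glue a aB) ?g = is_bridge H s a ?g"
    unfolding is_bridge_def glue_g cut using connected_hes_glue_iff assms(5,6) by simp
  then show ?thesis using assms(3) glue_g cut st by (simp add: bfl_move_def Let_def)
qed

lemma bfl_move_glue_guest:
  assumes "involution_on H aA" "connected_hes H s aA"
    and b: "involution_on HM (fst st)" "fst st rM = rM" "snd st \<in> HM" "sM (snd st) \<noteq> rM"
  shows "bfl_move H_I s_I (glue aA (fst st), off + snd st)
    = (glue aA (fst (bfl_move HM sM st)), off + snd (bfl_move HM sM st))"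
proof -
  obtain b v where st: "st = (b, v)" by fastforce
  let ?g = "sM v"
  have g: "?g \<in> HM" "b ?g \<in> HM" "?g \<noteq> rM" "b ?g \<noteq> rM"
    using b M.s_in_H st by (auto dest: involution_onD, metis involution_onD(2))
  have glue_g: "glue aA b (off + ?g) = off + b ?g" using glue_copy g by simp
  have cut: "cut_edge (glue aA b) (off + ?g) = glue aA (cut_edge b ?g)"
  proof
    fix u
    show "cut_edge (glue aA b) (off + ?g) u = glue aA (cut_edge b ?g) u"
    proof (cases "u \<in> copy \<and> u \<noteq> off + rM")
      case True
      then obtain w where "u = off + w" "w \<in> HM" "w \<noteq> rM" by (auto elim: copyE)
      then show ?thesis using glue_copy g glue_g by (auto simp: cut_edge_def)
    next
      case False
      then have "u \<noteq> off + ?g" "u \<noteq> off + b ?g" using g off_in_copy_iff by auto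
      then show ?thesis using False glue_g unfolding cut_edge_def glue_def by auto
    qed
  qed
  have "cut_edge b ?g rM = rM" using b g st by (simp add: cut_edge_def)
  moreover have "\<forall>u\<in>H. aA u \<in> H" "\<forall>u\<in>HM. cut_edge b ?g u \<in> HM"
    using cut_edge_in assms(1) b st by (auto dest: involution_onD)
  ultimately have "is_bridge H_I s_I (glue aA b) (off + ?g) = is_bridge HM sM b ?g"
    unfolding is_bridge_def glue_g cut using connected_hes_glue_iff assms(2) by simp
  then show ?thesis using s_I_copy b glue_g cut st by (simp add: bfl_move_def Let_def)
qed

lemma bfl_move_glue_enter:
  "\<forall>u\<in>H. aA u \<in> H \<Longrightarrow> \<forall>u\<in>HM. aB u \<in> HM \<Longrightarrow> s_I u = z
    \<Longrightarrow> bfl_move H_I s_I (glue aA aB, u) = (glue aA aB, off + rM)"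
  using is_bridge_glue_z glue_z by (simp add: bfl_move_def Let_def)

lemma bfl_move_glue_leave:
  assumes "\<forall>u\<in>H. aA u \<in> H" "\<forall>u\<in>HM. aB u \<in> HM" "v \<in> HM" "sM v = rM"
  shows "bfl_move H_I s_I (glue aA aB, off + v) = (glue aA aB, z)"
proof -
  have "is_bridge H_I s_I (glue aA aB) (off + rM)"
    using is_bridge_glue_z[OF assms(1,2)] is_bridge_partner[of "glue aA aB" z] glue_root glue_z
    by simp
  then show ?thesis using assms s_I_copy glue_root by (simp add: bfl_move_def Let_def)
qed

lemma bfl_move_glue_host_run:
  "s_I u = s (N.corner j) \<Longrightarrow> bfl_move H_I s_I (glue (N.alp_at j) (M.alp_at i), u)
    = (glue (N.alp_at (Suc j)) (M.alp_at i), N.corner (Suc j))"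
  using bfl_move_glue_host[of "N.run j"] N.involution_alp_at N.corner_in_H M.involution_alp_at
    M.connected_alp_at M.alp_at_root
  by (simp add: N.run_Suc)

lemma bfl_move_glue_guest_run:
  "sM (M.corner j) \<noteq> rM \<Longrightarrow> bfl_move H_I s_I (glue (N.alp_at i) (M.alp_at j), off + M.corner j)
    = (glue (N.alp_at i) (M.alp_at (Suc j)), off + M.corner (Suc j))"
  using bfl_move_glue_guest[of "N.alp_at i" "M.run j"] N.involution_alp_at N.connected_alp_at
    M.involution_alp_at M.alp_at_root M.corner_in_H
  by (simp add: M.run_Suc)

lemma alp_at_maps: "\<forall>u\<in>H. N.alp_at i u \<in> H" "\<forall>u\<in>HM. M.alp_at j u \<in> HM"
  using N.involution_alp_at M.involution_alp_at by (auto dest: involution_onD)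

text \<open>The BFL of the insertion follows N up to corner c_I, crosses the new bridge, runs through
  the complete BFL of M, crosses the bridge back and finishes the BFL of N.\<close>

lemma run_I_before: "j \<le> l - 1 \<Longrightarrow> run_I j = (glue (N.alp_at j) (M.alp_at 0), N.corner j)"
proof (induction j)
  case 0
  then show ?case by (simp add: run_I_def N.run_0 M.run_0)
next
  case (Suc j)
  have "N.corner j \<noteq> c_I" unfolding c_I_def using N.corner_distinct[of j "l - 1"] Suc.prems l_le by simp
  then have "s_I (N.corner j) = s (N.corner j)" using s_I_host N.corner_in_H by simp
  then show ?case using Suc bfl_move_glue_host_run by (simp add: run_I_Suc)
qed

lemma run_I_enter: "run_I l = (glue (N.alp_at (l - 1)) (M.alp_at 0), off + rM)"
  using run_I_before[of "l - 1"] run_I_Suc[of "l - 1"] l_pos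
    bfl_move_glue_enter[OF alp_at_maps] s_I_c_I c_I_def
  by simp

lemma run_I_inside:
  "j \<le> card HM - 1 \<Longrightarrow> run_I (l + j) = (glue (N.alp_at (l - 1)) (M.alp_at j), off + M.corner j)"
proof (induction j)
  case 0
  then show ?case using run_I_enter by (simp add: M.corner_0)
next
  case (Suc j)
  have "sM (M.corner j) \<noteq> rM" using M.s_corner_ne_root[of j] Suc.prems M.card_H_pos by simp
  then show ?case using Suc bfl_move_glue_guest_run by (simp add: run_I_Suc)
qed

lemma run_I_leave: "run_I (l + card HM) = (glue (N.alp_at (l - 1)) (M.alp_at (card HM - 1)), z)"
  using run_I_inside[of "card HM - 1"] run_I_Suc[of "l + (card HM - 1)"] M.card_H_pos
    bfl_move_glue_leave[OF alp_at_maps M.corner_in_H M.s_corner_last]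
  by simp

lemma run_I_after:
  "l \<le> j \<Longrightarrow> j \<le> card H
    \<Longrightarrow> run_I (j + card HM + 1) = (glue (N.alp_at j) (M.alp_at (card HM - 1)), N.corner j)"
proof (induction j rule: dec_induct)
  case base
  have "s_I z = s (N.corner (l - 1))" using s_I_z c_I_def by simp
  then show ?case
    using run_I_leave run_I_Suc[of "l + card HM"] bfl_move_glue_host_run l_pos by simp
next
  case (step j)
  have "N.corner (l - 1) \<noteq> N.corner j" using N.corner_distinct[of "l - 1" j] step l_pos by simp
  then have "s_I (N.corner j) = s (N.corner j)" using s_I_host N.corner_in_H c_I_def by metis
  then show ?case using step bfl_move_glue_host_run by (simp add: run_I_Suc)
qed

end

section \<open>Corner lists\<close>

lemma bfl_eq_mapI:
  assumes L: "0 < L" and state: "\<And>i. i \<le> L \<Longrightarrow> snd (bfl_state X i) = g i"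
    and last: "g L = rt X" and ne: "\<And>i. 0 < i \<Longrightarrow> i < L \<Longrightarrow> g i \<noteq> rt X"
  shows "bfl X = map g [0..<L]"
proof -
  have "bfl_len X = L"
    unfolding bfl_len_def using L last ne state
    by (intro Least_equality) (auto simp: not_less[symmetric])
  then show ?thesis using state by (auto simp: bfl_def simp del: upt_Suc)
qed

lemma is_rmap_bfl_run: "is_rmap N \<Longrightarrow> bfl_run (hes N) (sig N) (alp N) (rt N)"
  unfolding is_rmap_def by unfold_locales (auto simp: involution_on_def)

context bfl_run
begin

lemma bfl_state_eq_run:
  "hes X = H \<Longrightarrow> sig X = s \<Longrightarrow> alp X = a0 \<Longrightarrow> rt X = r \<Longrightarrow> bfl_state X i = run i"
  unfolding bfl_state_def bfl_step_eq_bfl_move run_def by simp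

lemma bfl_eq_corners:
  assumes "hes X = H" "sig X = s" "alp X = a0" "rt X = r"
  shows "bfl X = map corner [0..<card H]"
  using card_H_pos bfl_state_eq_run[OF assms] corner_card corner_ne_root assms(4)
  by (intro bfl_eq_mapI) simp_all

end

lemma nth_bfl:
  assumes "is_rmap N"
  shows nth_bfl_in_hes: "i < card (hes N) \<Longrightarrow> bfl N ! i \<in> hes N"
    and nth_bfl_distinct: "i < j \<Longrightarrow> j < card (hes N) \<Longrightarrow> bfl N ! i \<noteq> bfl N ! j"
    and nth_bfl_0: "bfl N ! 0 = rt N"
proof -
  interpret bfl_run "hes N" "sig N" "alp N" "rt N" using is_rmap_bfl_run[OF assms] .
  have bfl: "bfl N = map corner [0..<card (hes N)]" by (rule bfl_eq_corners) simp_all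
  show "i < card (hes N) \<Longrightarrow> bfl N ! i \<in> hes N" using corner_in_H bfl by simp
  show "i < j \<Longrightarrow> j < card (hes N) \<Longrightarrow> bfl N ! i \<noteq> bfl N ! j" using corner_distinct bfl by simp
  show "bfl N ! 0 = rt N" using card_H_pos corner_0 bfl by simp
qed

context bfl_run_root_edge
begin

definition corner_R :: "nat \<Rightarrow> nat" where
  "corner_R i = (if i = 0 then r else if i = 1 then x_R else if i \<le> k then corner (i - 1)
     else if i = k + 1 then y_R else corner (i - 2))"

lemma snd_run_R: "i \<le> card H + 2 \<Longrightarrow> snd (run_R i) = corner_R i"
proof -
  assume i: "i \<le> card H + 2"
  consider "i = 0" | "i = 1" | "2 \<le> i" "i \<le> k" | "i = k + 1" | "k + 2 \<le> i" using k_pos by linarith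
  then show ?thesis
  proof cases
    case 5
    then have "snd (run_R (i - 2 + 2)) = corner_R i" using run_R_after[of "i - 2"] i by (simp add: corner_R_def)
    moreover have "i - 2 + 2 = i" using 5 by simp
    ultimately show ?thesis by simp
  qed (use run_R_1 run_R_before[of "i - 1"] run_R_y k_pos in \<open>simp_all add: run_R_def corner_R_def\<close>)
qed

lemma corner_R_ne_root: "0 < i \<Longrightarrow> i < card H + 2 \<Longrightarrow> corner_R i \<noteq> r"
  unfolding corner_R_def
  using x_R_notin y_R_notin root_in_H corner_ne_root[of "i - 1"] corner_ne_root[of "i - 2"] k_pos k_le
  by auto

lemma bfl_R_op:
  assumes X: "hes X = H" "sig X = s" "alp X = a0" "rt X = r"
  shows "bfl (R_op k X) = map corner_R [0..<card H + 2]"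
proof -
  have "k - 1 < card H" using k_pos k_le by simp
  then have "bfl_corner X k = c_R" using bfl_eq_corners[OF X] by (simp add: bfl_corner_def c_R_def)
  then have R: "R_op k X = \<lparr>hes = H_R, sig = s_R, alp = a_R, rt = r\<rparr>"
    using X by (simp add: R_op_def Let_def H_R_def s_R_def a_R_def x_R_def y_R_def root_edge_sig_def)
  show ?thesis
  proof (rule bfl_eq_mapI)
    show "snd (bfl_state (R_op k X) i) = corner_R i" if "i \<le> card H + 2" for i
      using R snd_run_R[OF that] by (simp add: bfl_state_def bfl_step_eq_bfl_move run_R_def)
  qed (use R corner_R_ne_root corner_card k_le in \<open>simp_all add: corner_R_def\<close>)
qed

end

lemma nth_bfl_R_op:
  assumes N: "is_rmap N" and k: "1 \<le> k" "k \<le> card (hes N)" and i: "i < card (hes N) + 2"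
  shows "bfl (R_op k N) ! i = (if i = 0 then rt N else if i = 1 then fresh (hes N)
    else if i \<le> k then bfl N ! (i - 1) else if i = k + 1 then Suc (fresh (hes N)) else bfl N ! (i - 2))"
proof -
  interpret bfl_run_root_edge "hes N" "sig N" "alp N" "rt N" k
    using is_rmap_bfl_run[OF N] k by (simp add: bfl_run_root_edge_def bfl_run_root_edge_axioms_def)
  have "bfl N ! j = corner j" if "j < card (hes N)" for j
    using bfl_eq_corners[of N] that by simp
  then show ?thesis
    using bfl_R_op[of N] i k by (simp add: corner_R_def x_R_def y_R_def del: upt_Suc)
qed

context bfl_run_insertion
begin

definition corner_I :: "nat \<Rightarrow> nat" where
  "corner_I i = (if i < l then N.corner i else if i < l + card HM then off + M.corner (i - l)
     else if i = l + card HM then z else N.corner (i - card HM - 1))"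

lemma snd_run_I: "i \<le> card H + card HM + 1 \<Longrightarrow> snd (run_I i) = corner_I i"
proof -
  assume i: "i \<le> card H + card HM + 1"
  consider "i < l" | "l \<le> i" "i < l + card HM" | "i = l + card HM" | "l + card HM < i" by linarith
  then show ?thesis
  proof cases
    case 2
    then have "snd (run_I (l + (i - l))) = corner_I i"
      using run_I_inside[of "i - l"] by (simp add: corner_I_def)
    moreover have "l + (i - l) = i" using 2 by simp
    ultimately show ?thesis by simp
  next
    case 4
    then have "snd (run_I (i - card HM - 1 + card HM + 1)) = corner_I i"
      using run_I_after[of "i - card HM - 1"] i by (simp add: corner_I_def)
    moreover have "i - card HM - 1 + card HM + 1 = i" using 4 by simp
    ultimately show ?thesis by simp
  qed (use run_I_before[of i] run_I_leave in \<open>simp_all add: corner_I_def\<close>)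
qed

lemma corner_I_ne_root: "0 < i \<Longrightarrow> i < card H + card HM + 1 \<Longrightarrow> corner_I i \<noteq> r"
  unfolding corner_I_def
  using N.corner_ne_root[of i] N.corner_ne_root[of "i - card HM - 1"] l_pos l_le
    copy_notin_H[of "off + M.corner (i - l)"] off_in_copy_iff M.corner_in_H z_notin_H N.root_in_H
  by auto

lemma bfl_Ins_op:
  assumes X: "hes X = H" "sig X = s" "alp X = a0" "rt X = r"
    and Y: "hes Y = HM" "sig Y = sM" "alp Y = aM0" "rt Y = rM"
  shows "bfl (Ins_op Y l X) = map corner_I [0..<card H + card HM + 1]"
proof -
  have "l - 1 < card H" using l_pos l_le by simp
  then have c: "bfl_corner X l = c_I" using N.bfl_eq_corners[OF X] by (simp add: bfl_corner_def c_I_def)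
  have I: "Ins_op Y l X = \<lparr>hes = H_I, sig = s_I, alp = glue a0 aM0, rt = r\<rparr>"
    unfolding Ins_op_def Let_def c X Y H_I_def s_I_def glue_def off_def z_def copy_def by simp
  show ?thesis
  proof (rule bfl_eq_mapI)
    show "snd (bfl_state (Ins_op Y l X) i) = corner_I i" if "i \<le> card H + card HM + 1" for i
      using I snd_run_I[OF that] by (simp add: bfl_state_def bfl_step_eq_bfl_move run_I_def)
  qed (use I corner_I_ne_root N.corner_card l_le in \<open>simp_all add: corner_I_def\<close>)
qed

end

lemma nth_bfl_Ins_op:
  assumes N: "is_rmap N" and M: "is_rmap M" and l: "1 \<le> l" "l \<le> card (hes N)"
    and i: "i < card (hes N) + card (hes M) + 1"
  shows "bfl (Ins_op M l N) ! i = (if i < l then bfl N ! i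
    else if i < l + card (hes M) then fresh (hes N) + bfl M ! (i - l)
    else if i = l + card (hes M) then fresh (hes N) + fresh (hes M)
    else bfl N ! (i - card (hes M) - 1))"
proof -
  interpret bfl_run_insertion "hes N" "sig N" "alp N" "rt N" "hes M" "sig M" "alp M" "rt M" l
    using is_rmap_bfl_run[OF N] is_rmap_bfl_run[OF M] l
    by (simp add: bfl_run_insertion_def bfl_run_insertion_axioms_def)
  have "bfl N ! j = N.corner j" if "j < card (hes N)" for j
    using N.bfl_eq_corners[of N] that by simp
  moreover have "bfl M ! j = M.corner j" if "j < card (hes M)" for j
    using M.bfl_eq_corners[of M] that by simp
  ultimately show ?thesis
    using bfl_Ins_op[of N M] i l by (simp add: corner_I_def off_def z_def del: upt_Suc)
qed

section \<open>The commutation isomorphisms\<close>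

lemma card_fixpoint_free_involution:
  assumes fin: "finite A" and a: "\<And>x. x \<in> A \<Longrightarrow> a x \<in> A \<and> a (a x) = x \<and> a x \<noteq> x"
  shows "card A = 2 * card {{x, a x} | x. x \<in> A}"
proof -
  let ?E = "{{x, a x} | x. x \<in> A}"
  have pair: "{w, a w} = {u, a u}" if "w \<in> A" "u \<in> {w, a w}" for u w
    using that a by auto
  have "pairwise disjnt ?E"
    unfolding pairwise_def disjnt_def by (smt (verit) disjoint_iff mem_Collect_eq pair)
  moreover have "card e = 2" if "e \<in> ?E" for e using that a by (force simp: card_2_iff)
  moreover have "\<Union>?E = A" using a by auto
  moreover have "finite ?E" using fin by simp
  ultimately show ?thesis using card_Union_disjoint[of ?E] by (auto simp: mult.commute)
qed

lemma msize_closed_map: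
  assumes M: "is_rmap M" and closed: "closed_map M"
  shows "2 * msize M = card (hes M) + 1"
proof -
  let ?H = "hes M" and ?a = "alp M" and ?r = "rt M"
  have fin: "finite ?H" and inv: "\<And>x. x \<in> ?H \<Longrightarrow> ?a x \<in> ?H \<and> ?a (?a x) = x"
    and r: "?r \<in> ?H" "?a ?r = ?r"
    using M unfolding is_rmap_def by auto
  have fixed: "\<And>x. x \<in> ?H \<Longrightarrow> ?a x = x \<Longrightarrow> x = ?r" using closed unfolding closed_map_def by auto
  let ?E' = "{{x, ?a x} | x. x \<in> ?H - {?r}}"
  have "?a x \<in> ?H - {?r} \<and> ?a (?a x) = x \<and> ?a x \<noteq> x" if x: "x \<in> ?H - {?r}" for x
  proof -
    have "?a x \<noteq> ?r" using x inv r by (metis DiffE singletonI)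
    then show ?thesis using x inv fixed by auto
  qed
  then have "card (?H - {?r}) = 2 * card ?E'"
    using card_fixpoint_free_involution[of "?H - {?r}" ?a] fin by blast
  moreover have "{{x, ?a x} | x. x \<in> ?H} = insert {?r} ?E'" using r by auto
  moreover have "{?r} \<notin> ?E'" by auto
  ultimately show ?thesis
    using fin r card_Diff_singleton[of ?r ?H] card_gt_0_iff[of ?H] unfolding msize_def by fastforce
qed

lemma hes_R_op: "hes (R_op k X) = hes X \<union> {fresh (hes X), Suc (fresh (hes X))}"
  and rt_R_op: "rt (R_op k X) = rt X"
  and sig_R_op: "sig (R_op k X)
    = root_edge_sig (sig X) (rt X) (bfl_corner X k) (fresh (hes X)) (Suc (fresh (hes X)))"
  and alp_R_op:
    "alp (R_op k X) = (alp X)(fresh (hes X) := Suc (fresh (hes X)), Suc (fresh (hes X)) := fresh (hes X))"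
  by (simp_all add: R_op_def Let_def root_edge_sig_def)

lemma hes_Ins_op:
  "hes (Ins_op M l X) = hes X \<union> (\<lambda>u. fresh (hes X) + u) ` hes M \<union> {fresh (hes X) + fresh (hes M)}"
  and rt_Ins_op: "rt (Ins_op M l X) = rt X"
  by (simp_all add: Ins_op_def Let_def)

context
  fixes M X :: cmap and l :: nat
  assumes fin_X: "finite (hes X)" and fin_M: "finite (hes M)" and c_X: "bfl_corner X l \<in> hes X"
begin

lemma sig_Ins_op_host: "u \<in> hes X \<Longrightarrow> u \<noteq> bfl_corner X l \<Longrightarrow> sig (Ins_op M l X) u = sig X u"
  and sig_Ins_op_corner: "sig (Ins_op M l X) (bfl_corner X l) = fresh (hes X) + fresh (hes M)"
  and sig_Ins_op_bridge: "sig (Ins_op M l X) (fresh (hes X) + fresh (hes M)) = sig X (bfl_corner X l)"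
  and sig_Ins_op_copy: "v \<in> hes M \<Longrightarrow> sig (Ins_op M l X) (fresh (hes X) + v) = fresh (hes X) + sig M v"
  unfolding Ins_op_def Let_def using fresh_gt[OF fin_X] fresh_notin[OF fin_M] c_X by fastforce+

lemma alp_Ins_op_host: "u \<in> hes X \<Longrightarrow> alp (Ins_op M l X) u = alp X u"
  and alp_Ins_op_bridge: "alp (Ins_op M l X) (fresh (hes X) + fresh (hes M)) = fresh (hes X) + rt M"
  and alp_Ins_op_root: "alp (Ins_op M l X) (fresh (hes X) + rt M) = fresh (hes X) + fresh (hes M)"
  and alp_Ins_op_copy:
    "v \<in> hes M \<Longrightarrow> v \<noteq> rt M \<Longrightarrow> alp (Ins_op M l X) (fresh (hes X) + v) = fresh (hes X) + alp M v"
  unfolding Ins_op_def Let_def using fresh_gt[OF fin_X] fresh_notin[OF fin_M] by fastforce+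

end

text \<open>Possible relative positions of the corner cL of R_k(N) and the corner cI of N at which M is
  attached, and of the corner c of N and the corner cR of Ins(N) at which the new edge ends; x and
  Suc x are the new half-edges of R_k(N) and z is the bridge half-edge of Ins(N).\<close>

definition corner_config :: "nat \<Rightarrow> nat \<Rightarrow> nat \<Rightarrow> nat \<Rightarrow> nat \<Rightarrow> nat \<Rightarrow> nat \<Rightarrow> bool" where
  "corner_config r x z c cI cL cR \<longleftrightarrow>
     (cL = Suc x \<and> cI = c \<and> cR = c) \<or> (cL = cI \<and> cR = c \<and> cI \<noteq> c \<and> cI \<noteq> r)
   \<or> (cL = x \<and> cI = r \<and> cR = z \<and> c = r) \<or> (cL = x \<and> cI = r \<and> cR = c \<and> c \<noteq> r)
   \<or> (cL = c \<and> cI = c \<and> cR = z \<and> c \<noteq> r)"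

locale Ins_R_square =
  fixes N M :: cmap and k l k' l' :: nat
  assumes N: "is_rmap N" and M: "is_rmap M"
    and c_in: "bfl_corner N k \<in> hes N" and cI_in: "bfl_corner N l' \<in> hes N"
    and config: "corner_config (rt N) (fresh (hes N)) (fresh (hes N) + fresh (hes M))
      (bfl_corner N k) (bfl_corner N l') (bfl_corner (R_op k N) l) (bfl_corner (Ins_op M l' N) k')"
begin

abbreviation "H \<equiv> hes N"
abbreviation "HM \<equiv> hes M"
abbreviation "r \<equiv> rt N"
abbreviation "rM \<equiv> rt M"
abbreviation "c \<equiv> bfl_corner N k"
abbreviation "cI \<equiv> bfl_corner N l'"
abbreviation "RN \<equiv> R_op k N"
abbreviation "IN \<equiv> Ins_op M l' N"
abbreviation "cL \<equiv> bfl_corner RN l"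
abbreviation "cR \<equiv> bfl_corner IN k'"
abbreviation "L \<equiv> Ins_op M l RN"
abbreviation "R \<equiv> R_op k' IN"

definition "x = fresh H"
definition "y = Suc x"
definition "f = fresh HM"
definition "zR = x + f"
definition "x' = zR + 1"
definition "y' = Suc x'"
definition "offL = x + 2"
definition "zL = offL + f"

lemma finite_H: "finite H" and root_in_H: "r \<in> H" and finite_HM: "finite HM" and root_in_HM: "rM \<in> HM"
  and sig_N: "u \<in> H \<Longrightarrow> sig N u \<in> H" and alp_N: "u \<in> H \<Longrightarrow> alp N u \<in> H"
  and sig_M: "v \<in> HM \<Longrightarrow> sig M v \<in> HM" and alp_M: "v \<in> HM \<Longrightarrow> alp M v \<in> HM"
  using N M unfolding is_rmap_def by (auto dest: bij_betwE)

lemma less_x: "u \<in> H \<Longrightarrow> u < x" and less_f: "v \<in> HM \<Longrightarrow> v < f"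
  unfolding x_def f_def using fresh_gt finite_H finite_HM by blast+

lemma hes_RN: "hes RN = H \<union> {x, y}" and fresh_RN: "fresh (hes RN) = offL"
proof -
  show hRN: "hes RN = H \<union> {x, y}" unfolding hes_R_op x_def y_def ..
  have "fresh (hes RN) = Suc y"
    unfolding hRN using finite_H less_x by (intro fresh_eqI) (auto simp: y_def dest: less_x)
  then show "fresh (hes RN) = offL" by (simp add: y_def offL_def)
qed

lemma hes_IN: "hes IN = H \<union> (\<lambda>u. x + u) ` HM \<union> {zR}" and fresh_IN: "fresh (hes IN) = x'"
proof -
  show hIN: "hes IN = H \<union> (\<lambda>u. x + u) ` HM \<union> {zR}" unfolding hes_Ins_op x_def zR_def f_def ..
  have "fresh (hes IN) = Suc zR"
    unfolding hIN zR_def using finite_H finite_HM less_x less_f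
    by (intro fresh_eqI) (auto dest: less_x less_f intro: less_imp_le)
  then show "fresh (hes IN) = x'" by (simp add: x'_def)
qed

lemma config': "corner_config r x zR c cI cL cR"
  using config unfolding x_def zR_def f_def .

lemma cL_in: "cL \<in> hes RN" and cR_in: "cR \<in> hes IN"
  using config' c_in cI_in root_in_H hes_RN hes_IN unfolding corner_config_def y_def by auto

lemma hes_L: "hes L = H \<union> {x, y} \<union> (\<lambda>u. offL + u) ` HM \<union> {zL}"
  unfolding hes_Ins_op fresh_RN unfolding hes_RN zL_def f_def ..

lemma hes_R: "hes R = H \<union> (\<lambda>u. x + u) ` HM \<union> {zR} \<union> {x', y'}"
  unfolding hes_R_op fresh_IN unfolding hes_IN y'_def by auto

text \<open>The isomorphism fixes N, renames the new edge and moves the copy of M and the bridge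
  down by 2: in Ins(R_k N) they come after the two new half-edges, in R_k(Ins N) before them.\<close>

definition phi :: "nat \<Rightarrow> nat" where
  "phi u = (if u \<in> H then u else if u = x then x' else if u = y then y' else u - 2)"

lemma phi_H: "u \<in> H \<Longrightarrow> phi u = u"
  and phi_x: "phi x = x'" and phi_y: "phi y = y'"
  and phi_copy: "v \<in> HM \<Longrightarrow> phi (offL + v) = x + v"
  and phi_zL: "phi zL = zR"
  unfolding phi_def using less_x by (force simp: y_def offL_def zL_def zR_def)+

lemma bij_phi: "bij_betw phi (hes L) (hes R)"
proof (rule bij_betw_byWitness[where f' = "\<lambda>u. if u \<in> H then u else if u = x' then x else if u = y' then y else u + 2"])
  show "\<forall>u\<in>hes L. (if phi u \<in> H then phi u else if phi u = x' then x else if phi u = y' then y else phi u + 2) = u"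
    unfolding hes_L phi_def using less_x less_f
    by (force simp: y_def offL_def zL_def zR_def x'_def y'_def)
  show "\<forall>u\<in>hes R. phi (if u \<in> H then u else if u = x' then x else if u = y' then y else u + 2) = u"
    unfolding hes_R phi_def using less_x less_f
    by (force simp: y_def offL_def zL_def zR_def x'_def y'_def)
  show "phi ` hes L \<subseteq> hes R"
    unfolding hes_L hes_R using phi_H phi_x phi_y phi_copy phi_zL by auto
  show "(\<lambda>u. if u \<in> H then u else if u = x' then x else if u = y' then y else u + 2) ` hes R \<subseteq> hes L"
    unfolding hes_L hes_R using less_x less_f
    by (force simp: y_def offL_def zL_def zR_def x'_def y'_def)
qed

lemma finite_RN: "finite (hes RN)" and finite_IN: "finite (hes IN)"
  unfolding hes_RN hes_IN using finite_H finite_HM by simp_all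

lemma sig_alp_L:
  "u \<in> hes RN \<Longrightarrow> u \<noteq> cL \<Longrightarrow> sig L u = sig RN u"
  "w = cL \<Longrightarrow> sig L w = zL" "sig L zL = sig RN cL"
  "v \<in> HM \<Longrightarrow> sig L (offL + v) = offL + sig M v"
  "u \<in> hes RN \<Longrightarrow> alp L u = alp RN u"
  "alp L zL = offL + rM" "alp L (offL + rM) = zL"
  "v \<in> HM \<Longrightarrow> v \<noteq> rM \<Longrightarrow> alp L (offL + v) = offL + alp M v"
  using sig_Ins_op_host[OF finite_RN finite_HM cL_in] sig_Ins_op_corner[OF finite_RN finite_HM cL_in]
    sig_Ins_op_bridge[OF finite_RN finite_HM cL_in] sig_Ins_op_copy[OF finite_RN finite_HM cL_in]
    alp_Ins_op_host[OF finite_RN finite_HM cL_in] alp_Ins_op_bridge[OF finite_RN finite_HM cL_in]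
    alp_Ins_op_root[OF finite_RN finite_HM cL_in] alp_Ins_op_copy[OF finite_RN finite_HM cL_in]
  unfolding fresh_RN zL_def f_def by auto

lemma new_edge_notin: "x \<notin> H" "y \<notin> H" "x \<noteq> y"
  using less_x by (auto simp: y_def dest: less_x)

lemma sig_alp_RN:
  "sig RN r = x" "sig RN x = (if c = r then y else sig N r)" "sig RN y = sig N c"
  "c \<noteq> r \<Longrightarrow> w = c \<Longrightarrow> sig RN w = y"
  "u \<in> H \<Longrightarrow> u \<noteq> r \<Longrightarrow> u \<noteq> c \<Longrightarrow> sig RN u = sig N u"
  "u \<in> H \<Longrightarrow> alp RN u = alp N u" "alp RN x = y" "alp RN y = x"
  using root_edge_sig_root[OF new_edge_notin root_in_H c_in] root_edge_sig_x[OF new_edge_notin root_in_H c_in]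
    root_edge_sig_y[OF new_edge_notin root_in_H c_in] root_edge_sig_corner[OF new_edge_notin root_in_H c_in]
    root_edge_sig_other[OF new_edge_notin root_in_H c_in] new_edge_notin
  unfolding sig_R_op alp_R_op x_def[symmetric] y_def[symmetric] by auto

lemma sig_alp_IN:
  "u \<in> H \<Longrightarrow> u \<noteq> cI \<Longrightarrow> sig IN u = sig N u" "w = cI \<Longrightarrow> sig IN w = zR" "sig IN zR = sig N cI"
  "v \<in> HM \<Longrightarrow> sig IN (x + v) = x + sig M v"
  "u \<in> H \<Longrightarrow> alp IN u = alp N u"
  "alp IN zR = x + rM" "alp IN (x + rM) = zR"
  "v \<in> HM \<Longrightarrow> v \<noteq> rM \<Longrightarrow> alp IN (x + v) = x + alp M v"
  using sig_Ins_op_host[OF finite_H finite_HM cI_in] sig_Ins_op_corner[OF finite_H finite_HM cI_in]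
    sig_Ins_op_bridge[OF finite_H finite_HM cI_in] sig_Ins_op_copy[OF finite_H finite_HM cI_in]
    alp_Ins_op_host[OF finite_H finite_HM cI_in] alp_Ins_op_bridge[OF finite_H finite_HM cI_in]
    alp_Ins_op_root[OF finite_H finite_HM cI_in] alp_Ins_op_copy[OF finite_H finite_HM cI_in]
  unfolding x_def[symmetric] zR_def f_def[symmetric] by auto

lemma new_edge'_notin: "x' \<notin> hes IN" "y' \<notin> hes IN" "x' \<noteq> y'"
  using fresh_notin[OF finite_IN] fresh_gt[OF finite_IN] unfolding fresh_IN y'_def by fastforce+

lemma sig_alp_R:
  "sig R r = x'" "sig R x' = (if cR = r then y' else sig IN r)" "sig R y' = sig IN cR"
  "cR \<noteq> r \<Longrightarrow> w = cR \<Longrightarrow> sig R w = y'"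
  "u \<in> hes IN \<Longrightarrow> u \<noteq> r \<Longrightarrow> u \<noteq> cR \<Longrightarrow> sig R u = sig IN u"
  "u \<in> hes IN \<Longrightarrow> alp R u = alp IN u" "alp R x' = y'" "alp R y' = x'"
proof -
  have r: "rt IN \<in> hes IN" unfolding rt_Ins_op hes_IN using root_in_H by simp
  show "sig R r = x'" "sig R x' = (if cR = r then y' else sig IN r)" "sig R y' = sig IN cR"
    "cR \<noteq> r \<Longrightarrow> w = cR \<Longrightarrow> sig R w = y'"
    "u \<in> hes IN \<Longrightarrow> u \<noteq> r \<Longrightarrow> u \<noteq> cR \<Longrightarrow> sig R u = sig IN u"
    "u \<in> hes IN \<Longrightarrow> alp R u = alp IN u" "alp R x' = y'" "alp R y' = x'"
    using root_edge_sig_root[OF new_edge'_notin r cR_in] root_edge_sig_x[OF new_edge'_notin r cR_in]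
      root_edge_sig_y[OF new_edge'_notin r cR_in] root_edge_sig_corner[OF new_edge'_notin r cR_in]
      root_edge_sig_other[OF new_edge'_notin r cR_in] new_edge'_notin
    unfolding sig_R_op alp_R_op fresh_IN y'_def[symmetric] rt_Ins_op by auto
qed

lemma new_half_edges_above:
  "x < y" "x \<le> zR" "zR < x'" "x' < y'" "y < zL" "zL = zR + 2" "y' = zR + 2"
  by (simp_all add: y_def zR_def x'_def y'_def zL_def offL_def)

lemma half_edges_distinct:
  "u \<in> H \<Longrightarrow> u \<noteq> x \<and> u \<noteq> y \<and> u \<noteq> zR \<and> u \<noteq> x' \<and> u \<noteq> y' \<and> u \<noteq> zL"
  "u \<in> H \<Longrightarrow> x \<noteq> u \<and> y \<noteq> u \<and> zR \<noteq> u \<and> x' \<noteq> u \<and> y' \<noteq> u \<and> zL \<noteq> u"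
  "v \<in> HM \<Longrightarrow> x + v \<notin> H \<and> offL + v \<notin> H \<and> x + v \<noteq> zR \<and> x + v \<noteq> x' \<and> x + v \<noteq> y'
     \<and> offL + v \<noteq> zL \<and> offL + v \<noteq> x \<and> offL + v \<noteq> y"
  "v \<in> HM \<Longrightarrow> zR \<noteq> x + v \<and> x' \<noteq> x + v \<and> y' \<noteq> x + v \<and> zL \<noteq> offL + v \<and> x \<noteq> offL + v
     \<and> y \<noteq> offL + v"
  "v \<in> HM \<Longrightarrow> u \<in> H \<Longrightarrow> x + v \<noteq> u \<and> u \<noteq> x + v \<and> offL + v \<noteq> u \<and> u \<noteq> offL + v"
  "x \<noteq> y" "y \<noteq> x" "zR \<notin> H" "x' \<notin> H" "y' \<notin> H" "zL \<notin> H" "zR \<noteq> x'" "x' \<noteq> zR"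
  "zR \<noteq> y'" "y' \<noteq> zR" "x' \<noteq> y'" "y' \<noteq> x'" "zL \<noteq> x" "x \<noteq> zL" "zL \<noteq> y" "y \<noteq> zL"
proof -
  have above: "w \<in> H \<Longrightarrow> w < x" "v \<in> HM \<Longrightarrow> x + v < zR" "v \<in> HM \<Longrightarrow> offL + v < zL" for v w
    using less_x less_f by (auto simp: zR_def zL_def)
  note ineq = new_half_edges_above
  show "u \<in> H \<Longrightarrow> u \<noteq> x \<and> u \<noteq> y \<and> u \<noteq> zR \<and> u \<noteq> x' \<and> u \<noteq> y' \<and> u \<noteq> zL"
    "u \<in> H \<Longrightarrow> x \<noteq> u \<and> y \<noteq> u \<and> zR \<noteq> u \<and> x' \<noteq> u \<and> y' \<noteq> u \<and> zL \<noteq> u"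
    using above(1)[of u] ineq by linarith+
  show "v \<in> HM \<Longrightarrow> x + v \<notin> H \<and> offL + v \<notin> H \<and> x + v \<noteq> zR \<and> x + v \<noteq> x' \<and> x + v \<noteq> y'
     \<and> offL + v \<noteq> zL \<and> offL + v \<noteq> x \<and> offL + v \<noteq> y"
    "v \<in> HM \<Longrightarrow> zR \<noteq> x + v \<and> x' \<noteq> x + v \<and> y' \<noteq> x + v \<and> zL \<noteq> offL + v \<and> x \<noteq> offL + v
     \<and> y \<noteq> offL + v"
    using above(2,3)[of v] above(1)[of "x + v"] above(1)[of "offL + v"] ineq
    by (auto simp: offL_def y_def)
  show "v \<in> HM \<Longrightarrow> u \<in> H \<Longrightarrow> x + v \<noteq> u \<and> u \<noteq> x + v \<and> offL + v \<noteq> u \<and> u \<noteq> offL + v"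
    using above(1)[of u] by (auto simp: offL_def)
  show "x \<noteq> y" "y \<noteq> x" "zR \<notin> H" "x' \<notin> H" "y' \<notin> H" "zL \<notin> H" "zR \<noteq> x'" "x' \<noteq> zR"
    "zR \<noteq> y'" "y' \<noteq> zR" "x' \<noteq> y'" "y' \<noteq> x'" "zL \<noteq> x" "x \<noteq> zL" "zL \<noteq> y" "y \<noteq> zL"
    using above(1) ineq by (auto, fastforce+)
qed

lemma in_RN_IN: "u \<in> H \<Longrightarrow> u \<in> hes RN" "x \<in> hes RN" "y \<in> hes RN"
  "u \<in> H \<Longrightarrow> u \<in> hes IN" "v \<in> HM \<Longrightarrow> x + v \<in> hes IN" "zR \<in> hes IN"
  unfolding hes_RN hes_IN by auto

lemma phi_sig_alp_N: "u \<in> H \<Longrightarrow> phi (sig N u) = sig N u" "u \<in> H \<Longrightarrow> phi (alp N u) = alp N u"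
  and phi_sig_alp_M: "v \<in> HM \<Longrightarrow> phi (offL + sig M v) = x + sig M v"
    "v \<in> HM \<Longrightarrow> phi (offL + alp M v) = x + alp M v"
  using phi_H phi_copy sig_N alp_N sig_M alp_M by auto

lemma phi_commutes:
  assumes u: "u \<in> hes L"
  shows "phi (sig L u) = sig R (phi u) \<and> phi (alp L u) = alp R (phi u)"
proof -
  note rules = sig_alp_L sig_alp_RN sig_alp_IN sig_alp_R
  note basics = half_edges_distinct in_RN_IN phi_H phi_x phi_y phi_copy phi_zL
    phi_sig_alp_N phi_sig_alp_M sig_N alp_N sig_M alp_M root_in_H root_in_HM c_in cI_in
  note config = config'[unfolded corner_config_def, folded y_def]
  consider (H) "u \<in> H" | (x) "u = x" | (y) "u = y" | (copy) v where "v \<in> HM" "u = offL + v"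
    | (z) "u = zL"
    using u unfolding hes_L by auto
  then show ?thesis
  proof cases
    case H
    have "phi (alp L u) = alp R (phi u)"
      using H sig_alp_L(5) sig_alp_RN(6) sig_alp_IN(5) sig_alp_R(6) in_RN_IN phi_H phi_sig_alp_N
      by simp
    moreover have "phi (sig L r) = sig R (phi r)"
      using config by (elim disjE conjE; simp add: rules basics)
    moreover have "phi (sig L c) = sig R (phi c)"
      using config by (cases "c = r"; elim disjE conjE; simp add: rules basics)
    moreover have "phi (sig L cI) = sig R (phi cI)"
      using config by (cases "c = r"; elim disjE conjE; simp add: rules basics)
    moreover have "phi (sig L u) = sig R (phi u)" if "u \<noteq> r" "u \<noteq> c" "u \<noteq> cI"
      using that H config by (elim disjE conjE; simp add: rules basics)
    ultimately show ?thesis by metis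
  next
    case copy
    then show ?thesis using config by (cases "v = rM"; elim disjE conjE; simp add: rules basics)
  qed (use config in \<open>(elim disjE conjE; simp add: rules basics)\<close>)+
qed

lemma map_iso_L_R: "map_iso L R"
  unfolding map_iso_def
  using bij_phi phi_commutes phi_H root_in_H by (auto simp: rt_Ins_op rt_R_op)

end

lemma corner_config_before:
  assumes N: "is_rmap N" and M: "is_rmap M" and kl: "1 \<le> k" "k + 2 \<le> l" "l \<le> card (hes N) + 2"
  shows "corner_config (rt N) (fresh (hes N)) (fresh (hes N) + fresh (hes M))
    (bfl_corner N k) (bfl_corner N (l - 2)) (bfl_corner (R_op k N) l) (bfl_corner (Ins_op M (l - 2) N) k)"
proof -
  let ?B = "bfl N"
  have cL: "bfl_corner (R_op k N) l = (if l = k + 2 then Suc (fresh (hes N)) else ?B ! (l - 3))"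
    using nth_bfl_R_op[OF N, of k "l - 1"] kl unfolding bfl_corner_def by (auto simp: numeral_3_eq_3)
  have cR: "bfl_corner (Ins_op M (l - 2) N) k = ?B ! (k - 1)"
    using nth_bfl_Ins_op[OF N M, of "l - 2" "k - 1"] kl unfolding bfl_corner_def by auto
  have "l - 2 - 1 = l - 3" by simp
  moreover have "?B ! (l - 3) \<noteq> ?B ! (k - 1) \<and> ?B ! (l - 3) \<noteq> rt N" if "l \<noteq> k + 2"
  proof -
    have "k - 1 < l - 3" "0 < l - 3" "l - 3 < card (hes N)" using that kl by arith+
    then show ?thesis using nth_bfl_distinct[OF N] nth_bfl_0[OF N] by metis
  qed
  ultimately show ?thesis
    unfolding corner_config_def cL cR by (auto simp: bfl_corner_def)
qed

lemma corner_config_after: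
  assumes N: "is_rmap N" and M: "is_rmap M" and kl: "2 \<le> l" "l \<le> k + 1" "k \<le> card (hes N)"
  shows "corner_config (rt N) (fresh (hes N)) (fresh (hes N) + fresh (hes M))
    (bfl_corner N k) (bfl_corner N (l - 1)) (bfl_corner (R_op k N) l)
    (bfl_corner (Ins_op M (l - 1) N) (k + card (hes M) + 1))"
proof -
  let ?B = "bfl N"
  have cL: "bfl_corner (R_op k N) l = (if l = 2 then fresh (hes N) else ?B ! (l - 2))"
    using nth_bfl_R_op[OF N, of k "l - 1"] kl unfolding bfl_corner_def by (auto simp: numeral_2_eq_2)
  have cR: "bfl_corner (Ins_op M (l - 1) N) (k + card (hes M) + 1)
      = (if k = l - 1 then fresh (hes N) + fresh (hes M) else ?B ! (k - 1))"
    using nth_bfl_Ins_op[OF N M, of "l - 1" "k + card (hes M)"] kl unfolding bfl_corner_def by auto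
  have cI: "bfl_corner N (l - 1) = ?B ! (l - 2)" by (simp add: bfl_corner_def numeral_2_eq_2)
  have "?B ! (l - 2) \<noteq> rt N" if "l \<noteq> 2"
  proof -
    have "0 < l - 2" "l - 2 < card (hes N)" using that kl by arith+
    then show ?thesis using nth_bfl_distinct[OF N] nth_bfl_0[OF N] by metis
  qed
  moreover have "?B ! (k - 1) \<noteq> rt N" if "k \<noteq> 1"
  proof -
    have "0 < k - 1" "k - 1 < card (hes N)" using that kl by arith+
    then show ?thesis using nth_bfl_distinct[OF N] nth_bfl_0[OF N] by metis
  qed
  moreover have "?B ! (l - 2) \<noteq> ?B ! (k - 1)" if "k \<noteq> l - 1"
  proof -
    have "l - 2 < k - 1" "k - 1 < card (hes N)" using that kl by arith+
    then show ?thesis using nth_bfl_distinct[OF N] by metis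
  qed
  ultimately show ?thesis
    unfolding corner_config_def cL cR cI using nth_bfl_0[OF N] kl
    by (cases "l = 2"; cases "k = l - 1") (auto simp: bfl_corner_def numeral_2_eq_2)
qed

theorem lemma3p5:
  fixes M N :: cmap and k l :: nat
  assumes "is_rmap M" and "closed_map M" and "is_rmap N"
  shows "(1 \<le> k \<and> k + 2 \<le> l \<and> l \<le> ncorners N + 2 \<longrightarrow>
            map_iso (Ins_op M l (R_op k N)) (R_op k (Ins_op M (l - 2) N)))
       \<and> (2 \<le> l \<and> l \<le> k + 1 \<and> k \<le> ncorners N \<longrightarrow>
            map_iso (Ins_op M l (R_op k N)) (R_op (k + 2 * msize M) (Ins_op M (l - 1) N)))"
proof (intro conjI impI)
  assume kl: "1 \<le> k \<and> k + 2 \<le> l \<and> l \<le> ncorners N + 2"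
  then interpret Ins_R_square N M k l k "l - 2"
    using assms corner_config_before nth_bfl_in_hes
    by unfold_locales (auto simp: bfl_corner_def ncorners_def)
  show "map_iso (Ins_op M l (R_op k N)) (R_op k (Ins_op M (l - 2) N))" by (rule map_iso_L_R)
next
  assume kl: "2 \<le> l \<and> l \<le> k + 1 \<and> k \<le> ncorners N"
  interpret Ins_R_square N M k l "k + card (hes M) + 1" "l - 1"
    using assms kl corner_config_after nth_bfl_in_hes
    by unfold_locales (auto simp: bfl_corner_def ncorners_def)
  have "k + 2 * msize M = k + card (hes M) + 1" using msize_closed_map assms(1,2) by simp
  then show "map_iso (Ins_op M l (R_op k N)) (R_op (k + 2 * msize M) (Ins_op M (l - 1) N))"
    using map_iso_L_R by simp
qed

end
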